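(* For all positive integers $d,m,r$ and every $\varepsilon>0$, $\mathbf{n}_{\mathrm{pol}}(d,m,r,\varepsilon)=\mathbf{n}_\infty(d,m,r,\varepsilon)$.
   Context: Spaces are real finite-dimensional normed spaces. A finite-dimensional normed space $F$ is polyhedral if its closed unit ball has finitely many extreme points; $\mathrm{Pol}_d$ is the class of polyhedral spaces $F$ whose dual unit ball $B_{F^*}$ has exactly $2d$ extreme points (e.g. $\ell_\infty^d\in\mathrm{Pol}_d$). $\mathrm{Emb}(X,Y)$ is the set of linear isometric embeddings with the operator-norm metric. An $r$-coloring is a map into $\{0,\dots,r-1\}$; a subset $F$ of the colored space $M$ is $\varepsilon$-monochromatic if for some color $i$ every element of $F$ is within distance $\varepsilon$ of an element of $M$ of color $i$. $\mathbf{n}_\infty(d,m,r,\varepsilon)$ is the least $n$ such that every $r$-coloring of $\mathrm{Emb}(\ell_\infty^d,\ell_\infty^n)$ has an $\varepsilon$-monochromatic set $\gamma\circ\mathrm{Emb}(\ell_\infty^d,\ell_\infty^m)$ for some $\gamma\in\mathrm{Emb}(\ell_\infty^m,\ell_\infty^n)$. $\mathbf{n}_{\mathrm{pol}}(d,m,r,\varepsilon)$ is the least $n\ge m$ such that for all $F\in\mathrm{Pol}_d$ and $G\in\mathrm{Pol}_m$, every $r$-coloring of $\mathrm{Emb}(F,\ell_\infty^n)$ has an $\varepsilon$-monochromatic set $T\circ\mathrm{Emb}(F,G)$ for some $T\in\mathrm{Emb}(G,\ell_\infty^n)$. *)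

theory Defs
  imports Complex_Main "HOL-Library.Extended_Nat"
begin

text \<open>Every finite-dimensional real normed space is isometric to
a space (vec k, N): the vectors x :: nat => real supported on {..<k}, with a norm N
on that space. All notions below (embeddings, operator-norm distance, extreme points)
are isometry invariant. Linear maps vec k -> vec l are represented by matrices
A :: nat => nat => real with A i j = 0 unless i < l and j < k.\<close>

definition vec :: "nat \<Rightarrow> (nat \<Rightarrow> real) set" where
  "vec k = {x. \<forall>i\<ge>k. x i = 0}"

definition is_norm :: "nat \<Rightarrow> ((nat \<Rightarrow> real) \<Rightarrow> real) \<Rightarrow> bool" where
  "is_norm k N \<longleftrightarrow>
     (\<forall>x\<in>vec k. 0 \<le> N x) \<and>
     (\<forall>x\<in>vec k. N x = 0 \<longrightarrow> x = (\<lambda>i. 0)) \<and>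
     (\<forall>x\<in>vec k. \<forall>c. N (\<lambda>i. c * x i) = \<bar>c\<bar> * N x) \<and>
     (\<forall>x\<in>vec k. \<forall>y\<in>vec k. N (\<lambda>i. x i + y i) \<le> N x + N y)"

definition linf :: "nat \<Rightarrow> (nat \<Rightarrow> real) \<Rightarrow> real" where
  "linf n x = Max (insert 0 ((\<lambda>i. \<bar>x i\<bar>) ` {..<n}))"

definition is_mat :: "nat \<Rightarrow> nat \<Rightarrow> (nat \<Rightarrow> nat \<Rightarrow> real) \<Rightarrow> bool" where
  "is_mat l k A \<longleftrightarrow> (\<forall>i j. (l \<le> i \<or> k \<le> j) \<longrightarrow> A i j = 0)"

definition mapply :: "nat \<Rightarrow> (nat \<Rightarrow> nat \<Rightarrow> real) \<Rightarrow> (nat \<Rightarrow> real) \<Rightarrow> (nat \<Rightarrow> real)" where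
  "mapply k A x = (\<lambda>i. \<Sum>j<k. A i j * x j)"

definition mcomp :: "nat \<Rightarrow> (nat \<Rightarrow> nat \<Rightarrow> real) \<Rightarrow> (nat \<Rightarrow> nat \<Rightarrow> real) \<Rightarrow> (nat \<Rightarrow> nat \<Rightarrow> real)" where
  "mcomp k B A = (\<lambda>i j. \<Sum>p<k. B i p * A p j)"

definition Emb :: "nat \<Rightarrow> ((nat \<Rightarrow> real) \<Rightarrow> real) \<Rightarrow> nat \<Rightarrow> ((nat \<Rightarrow> real) \<Rightarrow> real)
                   \<Rightarrow> (nat \<Rightarrow> nat \<Rightarrow> real) set" where
  "Emb k N l M = {A. is_mat l k A \<and> (\<forall>x\<in>vec k. M (mapply k A x) = N x)}"

definition opdist :: "nat \<Rightarrow> ((nat \<Rightarrow> real) \<Rightarrow> real) \<Rightarrow> ((nat \<Rightarrow> real) \<Rightarrow> real)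
                      \<Rightarrow> (nat \<Rightarrow> nat \<Rightarrow> real) \<Rightarrow> (nat \<Rightarrow> nat \<Rightarrow> real) \<Rightarrow> real" where
  "opdist k N M A B =
     Sup {M (mapply k (\<lambda>i j. A i j - B i j) x) | x. x \<in> vec k \<and> N x \<le> 1}"

definition extreme_pt :: "(nat \<Rightarrow> real) \<Rightarrow> (nat \<Rightarrow> real) set \<Rightarrow> bool" where
  "extreme_pt x S \<longleftrightarrow> x \<in> S \<and>
     (\<forall>a\<in>S. \<forall>b\<in>S. \<forall>t. 0 < t \<and> t < 1 \<and> x = (\<lambda>i. (1 - t) * a i + t * b i) \<longrightarrow> a = b)"

definition unit_ball :: "nat \<Rightarrow> ((nat \<Rightarrow> real) \<Rightarrow> real) \<Rightarrow> (nat \<Rightarrow> real) set" where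
  "unit_ball k N = {x \<in> vec k. N x \<le> 1}"

text \<open>Dual space represented by coefficient vectors phi, acting as x |-> sum phi_j x_j.\<close>
definition dual_norm :: "nat \<Rightarrow> ((nat \<Rightarrow> real) \<Rightarrow> real) \<Rightarrow> (nat \<Rightarrow> real) \<Rightarrow> real" where
  "dual_norm k N \<phi> = Sup {\<bar>\<Sum>j<k. \<phi> j * x j\<bar> | x. x \<in> vec k \<and> N x \<le> 1}"

definition dual_ball :: "nat \<Rightarrow> ((nat \<Rightarrow> real) \<Rightarrow> real) \<Rightarrow> (nat \<Rightarrow> real) set" where
  "dual_ball k N = {\<phi> \<in> vec k. dual_norm k N \<phi> \<le> 1}"

definition polyhedral :: "nat \<Rightarrow> ((nat \<Rightarrow> real) \<Rightarrow> real) \<Rightarrow> bool" where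
  "polyhedral k N \<longleftrightarrow> is_norm k N \<and> finite {x. extreme_pt x (unit_ball k N)}"

definition Pol :: "nat \<Rightarrow> nat \<Rightarrow> ((nat \<Rightarrow> real) \<Rightarrow> real) \<Rightarrow> bool" where
  "Pol d k N \<longleftrightarrow> polyhedral k N \<and>
     finite {\<phi>. extreme_pt \<phi> (dual_ball k N)} \<and>
     card {\<phi>. extreme_pt \<phi> (dual_ball k N)} = 2 * d"

definition coloring :: "('a \<Rightarrow> nat) \<Rightarrow> nat \<Rightarrow> 'a set \<Rightarrow> bool" where
  "coloring c r M \<longleftrightarrow> (\<forall>A\<in>M. c A < r)"

definition eps_mono :: "('a \<Rightarrow> nat) \<Rightarrow> nat \<Rightarrow> ('a \<Rightarrow> 'a \<Rightarrow> real) \<Rightarrow> real \<Rightarrow> 'a set \<Rightarrow> 'a set \<Rightarrow> bool" where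
  "eps_mono c r dst \<epsilon> M S \<longleftrightarrow> (\<exists>i<r. \<forall>s\<in>S. \<exists>t\<in>M. c t = i \<and> dst s t \<le> \<epsilon>)"

definition least_enat :: "(nat \<Rightarrow> bool) \<Rightarrow> enat" where
  "least_enat P = (if \<exists>n. P n then enat (LEAST n. P n) else \<infinity>)"

definition n_inf_prop :: "nat \<Rightarrow> nat \<Rightarrow> nat \<Rightarrow> real \<Rightarrow> nat \<Rightarrow> bool" where
  "n_inf_prop d m r \<epsilon> n \<longleftrightarrow>
     (\<forall>c. coloring c r (Emb d (linf d) n (linf n)) \<longrightarrow>
        (\<exists>\<gamma>\<in>Emb m (linf m) n (linf n).
           eps_mono c r (opdist d (linf d) (linf n)) \<epsilon> (Emb d (linf d) n (linf n))
             (mcomp m \<gamma> ` Emb d (linf d) m (linf m))))"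

definition n_inf :: "nat \<Rightarrow> nat \<Rightarrow> nat \<Rightarrow> real \<Rightarrow> enat" where
  "n_inf d m r \<epsilon> = least_enat (n_inf_prop d m r \<epsilon>)"

definition n_pol_prop :: "nat \<Rightarrow> nat \<Rightarrow> nat \<Rightarrow> real \<Rightarrow> nat \<Rightarrow> bool" where
  "n_pol_prop d m r \<epsilon> n \<longleftrightarrow> m \<le> n \<and>
     (\<forall>kF NF kG NG. Pol d kF NF \<longrightarrow> Pol m kG NG \<longrightarrow>
       (\<forall>c. coloring c r (Emb kF NF n (linf n)) \<longrightarrow>
          (\<exists>T\<in>Emb kG NG n (linf n).
             eps_mono c r (opdist kF NF (linf n)) \<epsilon> (Emb kF NF n (linf n))
               (mcomp kG T ` Emb kF NF kG NG))))"

definition n_pol :: "nat \<Rightarrow> nat \<Rightarrow> nat \<Rightarrow> real \<Rightarrow> enat" where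
  "n_pol d m r \<epsilon> = least_enat (n_pol_prop d m r \<epsilon>)"

end

theory Submission
  imports Defs "HOL-Analysis.Function_Metric"
begin

(* If the dual ball of F has the 2d extreme points +-phi_1, ..., +-phi_d, then the map
   x |-> (phi_i x)_i is an isometric embedding iota_F of F into l_infinity^d; and l_infinity^d
   itself lies in Pol_d.  So the Ramsey property for the pair (l_infinity^d, l_infinity^m) is a
   special case of the one for (F, G).  Conversely, a colouring of Emb(F, l_infinity^n) is
   pulled back along iota_F to a colouring of Emb(l_infinity^d, l_infinity^n).  The key point is
   that every U in Emb(F, G) lifts to some V in Emb(l_infinity^d, l_infinity^m) with
   V iota_F = iota_G U: the functionals psi_j o U, where +-psi_j are the extreme points of the
   dual ball of G, norm F, so the dual ball of F is their absolutely convex hull; hence each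
   phi_i is +-(psi_j o U) for some j, and each psi_j o U is an l_1-combination of the phi_i.
   Since precomposition with the isometry iota_F does not increase operator distances,
   epsilon-monochromatic sets transfer. *)

definition dot :: "nat \<Rightarrow> (nat \<Rightarrow> real) \<Rightarrow> (nat \<Rightarrow> real) \<Rightarrow> real" where
  "dot k \<phi> x = (\<Sum>j<k. \<phi> j * x j)"

definition basis_vec :: "nat \<Rightarrow> nat \<Rightarrow> real" where
  "basis_vec i = (\<lambda>j. if j = i then 1 else 0)"

text \<open>The type \<open>nat \<Rightarrow> real\<close> has no \<open>real_vector\<close> instance, so convexity is spelled out
  coordinatewise instead of using the library notion.\<close>
definition convex_coord :: "(nat \<Rightarrow> real) set \<Rightarrow> bool" where
  "convex_coord S \<longleftrightarrow>
     (\<forall>a\<in>S. \<forall>b\<in>S. \<forall>t. 0 \<le> t \<and> t \<le> 1 \<longrightarrow> (\<lambda>i. (1 - t) * a i + t * b i) \<in> S)"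

lemma vec_lincomb: "x \<in> vec k \<Longrightarrow> y \<in> vec k \<Longrightarrow> (\<lambda>i. a * x i + b * y i) \<in> vec k"
  by (simp add: vec_def)

lemma vec_scale: "x \<in> vec k \<Longrightarrow> (\<lambda>i. c * x i) \<in> vec k"
  by (simp add: vec_def)

lemma vec_diff: "x \<in> vec k \<Longrightarrow> y \<in> vec k \<Longrightarrow> (\<lambda>i. x i - y i) \<in> vec k"
  by (simp add: vec_def)

lemma vec_uminus: "x \<in> vec k \<Longrightarrow> - x \<in> vec k"
  by (simp add: vec_def)

lemma uminus_uminus_fun [simp]: "- (- x) = (x :: nat \<Rightarrow> real)"
  by (simp add: fun_eq_iff)

lemma zero_in_vec [simp]: "(\<lambda>i. 0) \<in> vec k"
  by (simp add: vec_def)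

lemma basis_vec_in_vec: "i < k \<Longrightarrow> basis_vec i \<in> vec k"
  by (simp add: vec_def basis_vec_def)

lemma vec_eqI:
  assumes "x \<in> vec k" "y \<in> vec k" "\<And>i. i < k \<Longrightarrow> x i = y i"
  shows "x = y"
proof
  fix i show "x i = y i"
    using assms by (cases "i < k") (auto simp: vec_def)
qed

lemma dot_diff_right: "dot k \<phi> (\<lambda>i. x i - y i) = dot k \<phi> x - dot k \<phi> y"
  by (simp add: dot_def right_diff_distrib sum_subtractf)

lemma dot_scale_right: "dot k \<phi> (\<lambda>i. c * x i) = c * dot k \<phi> x"
  by (simp add: dot_def sum_distrib_left mult.left_commute)

lemma dot_scale_left: "dot k (\<lambda>i. c * \<phi> i) x = c * dot k \<phi> x"
  by (simp add: dot_def sum_distrib_left mult.assoc)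

lemma dot_uminus_left [simp]: "dot k (- \<phi>) x = - dot k \<phi> x"
  by (simp add: dot_def sum_negf)

lemma dot_uminus_right [simp]: "dot k \<phi> (- x) = - dot k \<phi> x"
  by (simp add: dot_def sum_negf)

lemma dot_lincomb_left:
  "dot k (\<lambda>i. a * \<phi> i + b * \<psi> i) x = a * dot k \<phi> x + b * dot k \<psi> x"
  by (simp add: dot_def distrib_right sum.distrib sum_distrib_left mult.assoc)

lemma dot_lincomb_right:
  "dot k \<phi> (\<lambda>i. a * x i + b * y i) = a * dot k \<phi> x + b * dot k \<phi> y"
  by (simp add: dot_def distrib_left sum.distrib sum_distrib_left mult.left_commute)

lemma dot_commute: "dot k \<phi> x = dot k x \<phi>"
  by (simp add: dot_def mult.commute)

lemma dot_zero [simp]: "dot k \<phi> (\<lambda>i. 0) = 0" "dot k (\<lambda>i. 0) x = 0"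
  by (simp_all add: dot_def)

lemma dot_basis_vec: "i < k \<Longrightarrow> dot k \<phi> (basis_vec i) = \<phi> i"
  by (simp add: dot_def basis_vec_def if_distrib[of "(*) _"] sum.delta cong: if_cong)

lemma abs_dot_le: "\<bar>dot k \<phi> x\<bar> \<le> (\<Sum>j<k. \<bar>\<phi> j\<bar> * \<bar>x j\<bar>)"
  unfolding dot_def by (rule order_trans[OF sum_abs]) (simp add: abs_mult)

lemma continuous_on_coordinate: "continuous_on S (\<lambda>x::nat \<Rightarrow> real. x i)"
  by (rule continuous_on_subset[OF continuous_on_product_coordinates]) simp

lemma continuous_on_dot_left: "continuous_on S (\<lambda>\<phi>. dot k \<phi> x)"
  unfolding dot_def by (intro continuous_intros continuous_on_coordinate)

lemma compact_coordinate_box: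
  fixes K :: "nat \<Rightarrow> real set"
  assumes "\<And>i. compact (K i)"
  shows "compact {x. \<forall>i. x i \<in> K i}"
proof -
  have "PiE UNIV K = {x. \<forall>i. x i \<in> K i}"
    by (auto simp: PiE_def Pi_def)
  then show ?thesis
    using assms compactin_PiE[of "\<lambda>i. euclidean" UNIV K]
    by (simp add: euclidean_product_topology)
qed

lemma closed_vec: "closed (vec k)"
proof -
  have "vec k = (\<Inter>i\<in>{k..}. {x. x i = 0})"
    by (auto simp: vec_def)
  moreover have "closed {x::nat \<Rightarrow> real. x i = 0}" for i
    by (rule closed_Collect_eq[OF continuous_on_coordinate continuous_on_const])
  ultimately show ?thesis by (simp add: closed_INT)
qed

lemma compact_if_closed_in_box:
  fixes S :: "(nat \<Rightarrow> real) set"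
  assumes "closed S" and "\<And>i. compact (K i)" and "\<And>x i. x \<in> S \<Longrightarrow> x i \<in> K i"
  shows "compact S"
proof -
  have "compact ({x. \<forall>i. x i \<in> K i} \<inter> S)"
    using compact_Int_closed compact_coordinate_box assms(1,2) by blast
  moreover have "{x. \<forall>i. x i \<in> K i} \<inter> S = S"
    using assms(3) by blast
  ultimately show ?thesis by simp
qed

section \<open>Separation and extreme points\<close>

lemma exists_nearest_point:
  assumes C: "C \<subseteq> vec k" "closed C" "C \<noteq> {}"
  shows "\<exists>c\<in>C. \<forall>c'\<in>C. (\<Sum>i<k. (\<theta> i - c i)\<^sup>2) \<le> (\<Sum>i<k. (\<theta> i - c' i)\<^sup>2)"
proof -
  define f where "f c = (\<Sum>i<k. (\<theta> i - c i)\<^sup>2)" for c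
  have f_cont: "continuous_on S f" for S
    unfolding f_def by (intro continuous_intros continuous_on_coordinate)
  obtain c0 where c0: "c0 \<in> C" using C(3) by auto
  define C0 where "C0 = C \<inter> {c. f c \<le> f c0}"
  define R where "R = sqrt (f c0)"
  have "c i \<in> (if i < k then {\<theta> i - R .. \<theta> i + R} else {0})" if c: "c \<in> C0" for c i
  proof (cases "i < k")
    case True
    have "\<bar>\<theta> i - c i\<bar>\<^sup>2 \<le> f c"
      unfolding f_def power2_abs by (rule member_le_sum) (use True in auto)
    also have "\<dots> \<le> f c0" using c by (simp add: C0_def)
    finally have "\<bar>\<theta> i - c i\<bar> \<le> R"
      unfolding R_def by (rule real_le_rsqrt)
    then show ?thesis using True by (simp add: abs_le_iff)
  next
    case False
    then show ?thesis using c C(1) by (auto simp: C0_def vec_def)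
  qed
  moreover have "closed C0"
    unfolding C0_def by (intro closed_Int C(2) closed_Collect_le f_cont continuous_on_const)
  ultimately have "compact C0"
    by (intro compact_if_closed_in_box[where K="\<lambda>i. if i < k then {\<theta> i - R .. \<theta> i + R} else {0}"])
      auto
  moreover have "C0 \<noteq> {}" using c0 by (auto simp: C0_def)
  ultimately have "\<exists>c\<in>C0. \<forall>c'\<in>C0. f c \<le> f c'"
    using f_cont by (intro continuous_attains_inf)
  then obtain c where c: "c \<in> C0" "\<And>c'. c' \<in> C0 \<Longrightarrow> f c \<le> f c'"
    by blast
  have "f c \<le> f c'" if "c' \<in> C" for c'
  proof (cases "f c' \<le> f c0")
    case True then show ?thesis using c(2) that by (simp add: C0_def)
  next
    case False then show ?thesis using c(2)[of c0] c0 by (simp add: C0_def)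
  qed
  then show ?thesis
    using c(1) unfolding C0_def f_def by blast
qed

text \<open>The first-order condition at a nearest point: moving from \<open>c\<^sub>0\<close> towards \<open>c\<close> by \<open>t\<close>
  changes the squared distance by \<open>- 2 t A + t\<^sup>2 Q\<close>, which is negative for small \<open>t\<close> if \<open>A > 0\<close>.\<close>
lemma nearest_point_obtuse:
  assumes C: "convex_coord C" and c0: "c0 \<in> C" and c: "c \<in> C"
    and nearest: "\<And>c'. c' \<in> C \<Longrightarrow> (\<Sum>i<k. (\<theta> i - c0 i)\<^sup>2) \<le> (\<Sum>i<k. (\<theta> i - c' i)\<^sup>2)"
  shows "dot k (\<lambda>i. \<theta> i - c0 i) (\<lambda>i. c i - c0 i) \<le> 0"
proof (rule ccontr)
  define A where "A = dot k (\<lambda>i. \<theta> i - c0 i) (\<lambda>i. c i - c0 i)"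
  define Q where "Q = (\<Sum>i<k. (c i - c0 i)\<^sup>2)"
  define D where "D = (\<Sum>i<k. (\<theta> i - c0 i)\<^sup>2)"
  assume "\<not> ?thesis"
  then have A: "A > 0" by (simp add: A_def)
  have Q: "Q \<ge> 0" unfolding Q_def by (intro sum_nonneg) simp
  have "2 * A \<le> t * Q" if t: "0 < t" "t \<le> 1" for t
  proof -
    have "(\<lambda>i. (1 - t) * c0 i + t * c i) \<in> C"
      using C c0 c t unfolding convex_coord_def by auto
    then have "D \<le> (\<Sum>i<k. (\<theta> i - ((1 - t) * c0 i + t * c i))\<^sup>2)"
      unfolding D_def by (rule nearest)
    also have "\<dots> = (\<Sum>i<k. (\<theta> i - c0 i)\<^sup>2 - 2 * t * ((\<theta> i - c0 i) * (c i - c0 i))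
                      + t\<^sup>2 * (c i - c0 i)\<^sup>2)"
      by (intro sum.cong refl) (simp add: power2_eq_square algebra_simps)
    also have "\<dots> = D - 2 * t * A + t\<^sup>2 * Q"
      unfolding A_def Q_def D_def dot_def
      by (simp add: sum.distrib sum_subtractf sum_distrib_left mult.assoc)
    finally have "0 \<le> t * (t * Q - 2 * A)"
      by (simp add: power2_eq_square algebra_simps)
    then show ?thesis using t by (simp add: zero_le_mult_iff)
  qed
  note key = this
  define t where "t = min 1 (A / (Q + 1))"
  have t: "0 < t" "t \<le> 1" using A Q by (auto simp: t_def)
  have "2 * A \<le> t * Q" by (rule key[OF t])
  also have "\<dots> \<le> A / (Q + 1) * Q" using Q by (intro mult_right_mono) (auto simp: t_def)
  also have "\<dots> < A" using A Q by (simp add: field_simps)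
  finally show False using A by simp
qed

lemma separation:
  assumes C: "C \<subseteq> vec k" "closed C" "convex_coord C" "C \<noteq> {}"
    and \<theta>: "\<theta> \<in> vec k" "\<theta> \<notin> C"
  shows "\<exists>z\<in>vec k. \<forall>c\<in>C. dot k z c < dot k z \<theta>"
proof -
  obtain c0 where c0: "c0 \<in> C" and nearest:
    "\<And>c. c \<in> C \<Longrightarrow> (\<Sum>i<k. (\<theta> i - c0 i)\<^sup>2) \<le> (\<Sum>i<k. (\<theta> i - c i)\<^sup>2)"
    using exists_nearest_point[OF C(1,2,4)] by blast
  define z where "z = (\<lambda>i. \<theta> i - c0 i)"
  have "z \<in> vec k" unfolding z_def using \<theta>(1) c0 C(1) by (intro vec_diff) auto
  moreover have "dot k z c0 < dot k z \<theta>"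
  proof -
    obtain i where i: "i < k" "\<theta> i \<noteq> c0 i"
      using vec_eqI[OF \<theta>(1), of c0] c0 C(1) \<theta>(2) by blast
    have "0 < (z i)\<^sup>2" using i by (simp add: z_def)
    also have "\<dots> \<le> (\<Sum>i<k. (z i)\<^sup>2)"
      by (rule member_le_sum) (use i in auto)
    also have "\<dots> = dot k z z"
      by (simp add: dot_def power2_eq_square)
    also have "\<dots> = dot k z \<theta> - dot k z c0"
      by (simp add: dot_diff_right[symmetric] z_def)
    finally show ?thesis by simp
  qed
  moreover have "dot k z c \<le> dot k z c0" if "c \<in> C" for c
    using nearest_point_obtuse[OF C(3) c0 that nearest] by (simp add: z_def dot_diff_right)
  ultimately show ?thesis by force
qed

lemma extreme_pt_in: "extreme_pt x S \<Longrightarrow> x \<in> S"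
  by (simp add: extreme_pt_def)

lemma extreme_ptD:
  assumes "extreme_pt x S" "a \<in> S" "b \<in> S" "0 < t" "t < 1" "x = (\<lambda>i. (1 - t) * a i + t * b i)"
  shows "a = b"
  using assms unfolding extreme_pt_def by blast

lemma sum_squares_convex_comb:
  fixes a b :: "nat \<Rightarrow> real"
  shows "(\<Sum>i<k. ((1 - t) * a i + t * b i)\<^sup>2)
     = (1 - t) * (\<Sum>i<k. (a i)\<^sup>2) + t * (\<Sum>i<k. (b i)\<^sup>2) - t * (1 - t) * (\<Sum>i<k. (a i - b i)\<^sup>2)"
proof -
  have "((1 - t) * u + t * v)\<^sup>2 = (1 - t) * u\<^sup>2 + t * v\<^sup>2 - t * (1 - t) * (u - v)\<^sup>2" for u v :: real
    by (simp add: power2_eq_square algebra_simps)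
  then have "(\<Sum>i<k. ((1 - t) * a i + t * b i)\<^sup>2)
      = (\<Sum>i<k. (1 - t) * (a i)\<^sup>2 + t * (b i)\<^sup>2 - t * (1 - t) * (a i - b i)\<^sup>2)"
    by simp
  then show ?thesis
    by (simp add: sum.distrib sum_subtractf sum_distrib_left)
qed

lemma extreme_pt_if_max_sum_squares:
  assumes K: "K \<subseteq> vec k" and \<phi>: "\<phi> \<in> K"
    and max: "\<And>\<psi>. \<psi> \<in> K \<Longrightarrow> (\<Sum>i<k. (\<psi> i)\<^sup>2) \<le> (\<Sum>i<k. (\<phi> i)\<^sup>2)"
  shows "extreme_pt \<phi> K"
  unfolding extreme_pt_def
proof (intro conjI \<phi> ballI allI impI)
  fix a b t assume ab: "a \<in> K" "b \<in> K" and t: "0 < t \<and> t < 1 \<and> \<phi> = (\<lambda>i. (1 - t) * a i + t * b i)"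
  let ?q = "\<lambda>\<psi>. \<Sum>i<k. (\<psi> i)\<^sup>2"
  have "?q \<phi> = (1 - t) * ?q a + t * ?q b - t * (1 - t) * (\<Sum>i<k. (a i - b i)\<^sup>2)"
    unfolding t[THEN conjunct2, THEN conjunct2] by (rule sum_squares_convex_comb)
  moreover have "(1 - t) * ?q a + t * ?q b \<le> (1 - t) * ?q \<phi> + t * ?q \<phi>"
    using t max[OF ab(1)] max[OF ab(2)] by (intro add_mono mult_left_mono) auto
  moreover have "(1 - t) * ?q \<phi> + t * ?q \<phi> = ?q \<phi>"
    by (simp add: algebra_simps)
  ultimately have "t * (1 - t) * (\<Sum>i<k. (a i - b i)\<^sup>2) \<le> 0"
    by linarith
  moreover have "t * (1 - t) > 0" using t by simp
  ultimately have "(\<Sum>i<k. (a i - b i)\<^sup>2) \<le> 0"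
    using mult_le_cancel_left_pos[of "t * (1 - t)" _ 0] by simp
  then have "(\<Sum>i<k. (a i - b i)\<^sup>2) = 0"
    by (meson antisym sum_nonneg zero_le_power2)
  then have "a i = b i" if "i < k" for i
    using that by (simp add: sum_nonneg_eq_0_iff)
  then show "a = b" using vec_eqI ab K by blast
qed

lemma convex_comb_eq_upper_bound:
  fixes a b M t :: real
  assumes "a \<le> M" "b \<le> M" "0 < t" "t < 1" "M = (1 - t) * a + t * b"
  shows "a = M \<and> b = M"
proof -
  have "(1 - t) * (M - a) + t * (M - b) = 0"
    using assms(5) by (simp add: algebra_simps)
  moreover have "0 \<le> (1 - t) * (M - a)" "0 \<le> t * (M - b)"
    using assms by simp_all
  ultimately have "(1 - t) * (M - a) = 0" "t * (M - b) = 0"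
    by linarith+
  then show ?thesis using assms(3,4) by simp
qed

lemma extreme_pt_if_extreme_among_maximizers:
  assumes \<phi>: "extreme_pt \<phi> {\<psi>\<in>K. dot k \<psi> x = M}"
    and max: "\<And>\<psi>. \<psi> \<in> K \<Longrightarrow> dot k \<psi> x \<le> M"
  shows "extreme_pt \<phi> K"
  unfolding extreme_pt_def
proof (intro conjI ballI allI impI)
  show "\<phi> \<in> K" using \<phi> by (simp add: extreme_pt_def)
  fix a b t assume ab: "a \<in> K" "b \<in> K" and t: "0 < t \<and> t < 1 \<and> \<phi> = (\<lambda>i. (1 - t) * a i + t * b i)"
  have "M = (1 - t) * dot k a x + t * dot k b x"
    using \<phi> t by (simp add: extreme_pt_def dot_lincomb_left)
  then have "dot k a x = M \<and> dot k b x = M"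
    using t max[OF ab(1)] max[OF ab(2)] by (intro convex_comb_eq_upper_bound) simp_all
  then show "a = b"
    using \<phi> ab t unfolding extreme_pt_def by blast
qed

lemma exists_extreme_maximizer:
  assumes K: "K \<subseteq> vec k" "compact K" "K \<noteq> {}"
  shows "\<exists>\<phi>. extreme_pt \<phi> K \<and> (\<forall>\<psi>\<in>K. dot k \<psi> x \<le> dot k \<phi> x)"
proof -
  have "\<exists>\<phi>0\<in>K. \<forall>\<psi>\<in>K. dot k \<psi> x \<le> dot k \<phi>0 x"
    using K(2,3) continuous_on_dot_left by (rule continuous_attains_sup)
  then obtain \<phi>0 where \<phi>0: "\<phi>0 \<in> K" "\<And>\<psi>. \<psi> \<in> K \<Longrightarrow> dot k \<psi> x \<le> dot k \<phi>0 x"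
    by blast
  define K' where "K' = {\<psi>\<in>K. dot k \<psi> x = dot k \<phi>0 x}"
  have "compact K'"
    unfolding K'_def using K(2)
    by (simp add: Collect_conj_eq compact_Int_closed closed_Collect_eq continuous_on_dot_left)
  moreover have "K' \<noteq> {}" using \<phi>0 by (auto simp: K'_def)
  moreover have "continuous_on K' (\<lambda>\<psi>. \<Sum>i<k. (\<psi> i)\<^sup>2)"
    by (intro continuous_intros continuous_on_coordinate)
  ultimately have "\<exists>\<phi>\<in>K'. \<forall>\<psi>\<in>K'. (\<Sum>i<k. (\<psi> i)\<^sup>2) \<le> (\<Sum>i<k. (\<phi> i)\<^sup>2)"
    by (rule continuous_attains_sup)
  then obtain \<phi> where \<phi>: "\<phi> \<in> K'" "\<And>\<psi>. \<psi> \<in> K' \<Longrightarrow> (\<Sum>i<k. (\<psi> i)\<^sup>2) \<le> (\<Sum>i<k. (\<phi> i)\<^sup>2)"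
    by blast
  have "extreme_pt \<phi> K'"
    by (rule extreme_pt_if_max_sum_squares[OF _ \<phi>]) (use K(1) in \<open>auto simp: K'_def\<close>)
  then have "extreme_pt \<phi> K"
    unfolding K'_def by (rule extreme_pt_if_extreme_among_maximizers) (rule \<phi>0(2))
  then show ?thesis using \<phi>(1) \<phi>0(2) by (auto simp: K'_def)
qed

lemma extreme_pt_uminus:
  assumes "\<And>x. x \<in> S \<Longrightarrow> - x \<in> S" and "extreme_pt \<phi> S"
  shows "extreme_pt (- \<phi>) S"
  unfolding extreme_pt_def
proof (intro conjI ballI allI impI)
  show "- \<phi> \<in> S" using assms by (simp add: extreme_pt_def)
  fix a b t assume ab: "a \<in> S" "b \<in> S" and t: "0 < t \<and> t < 1 \<and> - \<phi> = (\<lambda>i. (1 - t) * a i + t * b i)"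
  then have "\<phi> = (\<lambda>i. (1 - t) * (- a) i + t * (- b) i)"
    by (simp add: fun_eq_iff algebra_simps)
  then have "- a = - b"
    using assms ab t unfolding extreme_pt_def by blast
  then show "a = b" by (simp add: fun_eq_iff)
qed

lemma extreme_pt_zero_symmetric:
  assumes S: "\<And>x. x \<in> S \<Longrightarrow> - x \<in> S" and "extreme_pt (\<lambda>i. 0) S" and a: "a \<in> S"
  shows "a = (\<lambda>i. 0)"
proof -
  have "a = - a"
    by (rule extreme_ptD[OF assms(2) a S[OF a], where t="1/2"]) simp_all
  then show ?thesis
    by (simp add: fun_eq_iff)
qed

section \<open>Norms on coordinate spaces\<close>

lemma abs_le_linf: "i < n \<Longrightarrow> \<bar>x i\<bar> \<le> linf n x"
  unfolding linf_def by (rule Max_ge) auto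

lemma linf_nonneg: "0 \<le> linf n x"
  unfolding linf_def by (rule Max_ge) auto

lemma linf_leI: "0 \<le> c \<Longrightarrow> (\<And>i. i < n \<Longrightarrow> \<bar>x i\<bar> \<le> c) \<Longrightarrow> linf n x \<le> c"
  unfolding linf_def by (rule Max.boundedI) auto

lemma linf_attained: "0 < linf n x \<Longrightarrow> \<exists>i<n. \<bar>x i\<bar> = linf n x"
proof -
  assume pos: "0 < linf n x"
  have "linf n x \<in> insert 0 ((\<lambda>i. \<bar>x i\<bar>) ` {..<n})"
    unfolding linf_def by (rule Max_in) auto
  then show ?thesis using pos by auto
qed

lemma linf_scale: "linf n (\<lambda>i. c * x i) = \<bar>c\<bar> * linf n x"
proof (rule antisym)
  show "linf n (\<lambda>i. c * x i) \<le> \<bar>c\<bar> * linf n x"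
    by (rule linf_leI) (auto simp: abs_mult linf_nonneg intro: mult_left_mono abs_le_linf)
  show "\<bar>c\<bar> * linf n x \<le> linf n (\<lambda>i. c * x i)"
  proof (cases "c = 0")
    case False
    have "linf n x \<le> linf n (\<lambda>i. c * x i) / \<bar>c\<bar>"
    proof (rule linf_leI)
      fix i assume "i < n"
      then have "\<bar>c\<bar> * \<bar>x i\<bar> \<le> linf n (\<lambda>i. c * x i)"
        using abs_le_linf[of i n "\<lambda>i. c * x i"] by (simp add: abs_mult)
      then show "\<bar>x i\<bar> \<le> linf n (\<lambda>i. c * x i) / \<bar>c\<bar>"
        using False by (simp add: field_simps)
    qed (simp add: linf_nonneg)
    then show ?thesis using False by (simp add: field_simps)
  qed (simp add: linf_nonneg)
qed

lemma linf_basis_vec: "i < n \<Longrightarrow> linf n (basis_vec i) = 1"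
  using abs_le_linf[of i n "basis_vec i"] by (intro antisym linf_leI) (auto simp: basis_vec_def)

lemma linf_is_norm: "is_norm n (linf n)"
  unfolding is_norm_def
proof (intro conjI ballI allI impI linf_nonneg linf_scale)
  fix x assume "x \<in> vec n" "linf n x = 0"
  then show "x = (\<lambda>i. 0)"
    using abs_le_linf[of _ n x] by (intro vec_eqI[of _ n]) force+
next
  fix x y :: "nat \<Rightarrow> real"
  show "linf n (\<lambda>i. x i + y i) \<le> linf n x + linf n y"
    by (rule linf_leI) (auto intro: add_nonneg_nonneg linf_nonneg abs_triangle_ineq[THEN order_trans]
          add_mono abs_le_linf)
qed

locale coord_norm =
  fixes k :: nat and N :: "(nat \<Rightarrow> real) \<Rightarrow> real"
  assumes is_norm: "is_norm k N"
begin

lemma nonneg: "x \<in> vec k \<Longrightarrow> 0 \<le> N x"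
  using is_norm by (simp add: is_norm_def)

lemma homogeneous: "x \<in> vec k \<Longrightarrow> N (\<lambda>i. c * x i) = \<bar>c\<bar> * N x"
  using is_norm by (simp add: is_norm_def)

lemma triangle: "x \<in> vec k \<Longrightarrow> y \<in> vec k \<Longrightarrow> N (\<lambda>i. x i + y i) \<le> N x + N y"
  using is_norm by (simp add: is_norm_def)

lemma eq_zero_imp: "x \<in> vec k \<Longrightarrow> N x = 0 \<Longrightarrow> x = (\<lambda>i. 0)"
  using is_norm by (simp add: is_norm_def)

lemma zero [simp]: "N (\<lambda>i. 0) = 0"
  using homogeneous[of "\<lambda>i. 0" 0] by simp

lemma uminus: "x \<in> vec k \<Longrightarrow> N (- x) = N x"
  using homogeneous[of x "-1"] by (simp add: fun_Compl_def)

lemma abs_diff_le: "x \<in> vec k \<Longrightarrow> y \<in> vec k \<Longrightarrow> \<bar>N x - N y\<bar> \<le> N (\<lambda>i. x i - y i)"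
proof -
  assume xy: "x \<in> vec k" "y \<in> vec k"
  have "N x \<le> N (\<lambda>i. x i - y i) + N y" "N y \<le> N (\<lambda>i. y i - x i) + N x"
    using triangle[OF vec_diff[OF xy] xy(2)] triangle[OF vec_diff[OF xy(2,1)] xy(1)] by simp_all
  moreover have "N (\<lambda>i. y i - x i) = N (\<lambda>i. x i - y i)"
    using homogeneous[OF vec_diff[OF xy], of "-1"] by simp
  ultimately show ?thesis by linarith
qed

lemma le_sum_basis: "x \<in> vec k \<Longrightarrow> N x \<le> (\<Sum>i<k. \<bar>x i\<bar> * N (basis_vec i))"
proof -
  assume x: "x \<in> vec k"
  have "N (\<lambda>i. if i < p then x i else 0) \<le> (\<Sum>i<p. \<bar>x i\<bar> * N (basis_vec i))" if "p \<le> k" for p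
    using that
  proof (induction p)
    case (Suc p)
    let ?x = "\<lambda>i. if i < p then x i else 0"
    have "(\<lambda>i. if i < Suc p then x i else 0) = (\<lambda>i. ?x i + x p * basis_vec p i)"
      by (intro ext) (auto simp: basis_vec_def less_Suc_eq)
    moreover have "N (\<lambda>i. ?x i + x p * basis_vec p i) \<le> N ?x + N (\<lambda>i. x p * basis_vec p i)"
      by (rule triangle) (use Suc.prems in \<open>auto simp: vec_def basis_vec_def\<close>)
    moreover have "N (\<lambda>i. x p * basis_vec p i) = \<bar>x p\<bar> * N (basis_vec p)"
      using Suc.prems by (intro homogeneous basis_vec_in_vec) simp
    ultimately show ?case using Suc by simp
  qed simp
  moreover have "(\<lambda>i. if i < k then x i else 0) = x"
    using x by (auto simp: vec_def)
  ultimately show ?thesis by (metis order_refl)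
qed

lemma continuous: "continuous_on (vec k) N"
  unfolding continuous_on_def
proof (intro ballI)
  fix z assume z: "z \<in> vec k"
  let ?g = "\<lambda>y. \<Sum>i<k. \<bar>y i - z i\<bar> * N (basis_vec i)"
  have "((\<lambda>y. y i) \<longlongrightarrow> z i) (at z within vec k)" for i
    using z continuous_on_coordinate[of "vec k" i] by (simp add: continuous_on_def)
  then have "(?g \<longlongrightarrow> ?g z) (at z within vec k)"
    by (intro tendsto_intros)
  then have "(?g \<longlongrightarrow> 0) (at z within vec k)" by simp
  moreover have "norm (N y - N z) \<le> norm (?g y) * 1" if y: "y \<in> vec k" for y
  proof -
    have "norm (N y - N z) \<le> N (\<lambda>i. y i - z i)" using abs_diff_le[OF y z] by simp
    also have "\<dots> \<le> ?g y" using le_sum_basis[OF vec_diff[OF y z]] by simp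
    finally show ?thesis by simp
  qed
  then have "\<forall>\<^sub>F y in at z within vec k. norm (N y - N z) \<le> norm (?g y) * 1"
    by (auto simp: eventually_at_filter)
  ultimately have "((\<lambda>y. N y - N z) \<longlongrightarrow> 0) (at z within vec k)"
    by (rule tendsto_0_le)
  then show "(N \<longlongrightarrow> N z) (at z within vec k)"
    by (rule LIM_zero_cancel)
qed

end

interpretation linf: coord_norm n "linf n" for n
  by unfold_locales (rule linf_is_norm)

context coord_norm
begin

lemma linf_bounded_by_norm: "\<exists>C>0. \<forall>x\<in>vec k. linf k x \<le> C * N x"
proof (cases "k = 0")
  case True
  then show ?thesis using nonneg by (intro exI[of _ 1]) (simp add: linf_def)
next
  case False
  define S where "S = vec k \<inter> linf k -` {1}"
  have "compact S"
  proof (rule compact_if_closed_in_box[where K="\<lambda>i. if i < k then {-1..1} else {0}"])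
    show "closed S"
      unfolding S_def by (intro continuous_closed_preimage linf.continuous closed_vec) simp
    fix x i assume "x \<in> S"
    then show "x i \<in> (if i < k then {-1..1} else {0})"
      using abs_le_linf[of i k x] by (auto simp: S_def vec_def abs_le_iff)
  qed simp
  moreover have "basis_vec 0 \<in> S"
    using False by (simp add: S_def basis_vec_in_vec linf_basis_vec)
  ultimately have "\<exists>x0\<in>S. \<forall>y\<in>S. N x0 \<le> N y"
    using continuous_on_subset[OF continuous] by (intro continuous_attains_inf) (auto simp: S_def)
  then obtain x0 where x0: "x0 \<in> S" "\<And>y. y \<in> S \<Longrightarrow> N x0 \<le> N y" by blast
  have "x0 \<noteq> (\<lambda>i. 0)" using x0(1) by (auto simp: S_def)
  then have "0 < N x0"
    using x0(1) nonneg eq_zero_imp by (force simp: S_def)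
  moreover have "linf k x \<le> 1 / N x0 * N x" if x: "x \<in> vec k" for x
  proof (cases "linf k x = 0")
    case False
    then have pos: "0 < linf k x" using linf_nonneg[of k x] by simp
    define s where "s = 1 / linf k x"
    have "linf k (\<lambda>i. s * x i) = 1"
      using linf_scale[of k s x] pos by (simp add: s_def)
    then have "(\<lambda>i. s * x i) \<in> S"
      using vec_scale[OF x] by (simp add: S_def)
    then have "N x0 \<le> N (\<lambda>i. s * x i)"
      by (rule x0(2))
    also have "\<dots> = s * N x"
      using homogeneous[OF x, of s] pos by (simp add: s_def)
    finally have "N x0 \<le> (1 / linf k x) * N x" by (simp add: s_def)
    then show ?thesis using pos \<open>0 < N x0\<close> by (simp add: field_simps)
  qed (use nonneg[OF x] \<open>0 < N x0\<close> in simp)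
  ultimately show ?thesis
    by (intro exI[of _ "1 / N x0"]) simp
qed

section \<open>The dual ball\<close>

lemma bdd_above_dual_norm_set: "bdd_above {\<bar>\<Sum>j<k. \<phi> j * x j\<bar> | x. x \<in> vec k \<and> N x \<le> 1}"
proof -
  obtain C where C: "C > 0" "\<And>x. x \<in> vec k \<Longrightarrow> linf k x \<le> C * N x"
    using linf_bounded_by_norm by blast
  have "\<bar>dot k \<phi> x\<bar> \<le> (\<Sum>j<k. \<bar>\<phi> j\<bar>) * C" if x: "x \<in> vec k" "N x \<le> 1" for x
  proof -
    have "\<bar>dot k \<phi> x\<bar> \<le> (\<Sum>j<k. \<bar>\<phi> j\<bar> * linf k x)"
      using abs_dot_le by (rule order_trans) (auto intro!: sum_mono mult_left_mono abs_le_linf)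
    also have "\<dots> \<le> (\<Sum>j<k. \<bar>\<phi> j\<bar> * C)"
      using C(2)[OF x(1)] x(2) C(1)
      by (intro sum_mono mult_left_mono) (auto intro: order_trans[OF _ mult_left_le])
    finally show ?thesis by (simp add: sum_distrib_right)
  qed
  then show ?thesis
    by (intro bdd_aboveI[of _ "(\<Sum>j<k. \<bar>\<phi> j\<bar>) * C"]) (auto simp: dot_def)
qed

lemma dual_ball_iff: "\<phi> \<in> dual_ball k N \<longleftrightarrow> \<phi> \<in> vec k \<and> (\<forall>x\<in>vec k. \<bar>dot k \<phi> x\<bar> \<le> N x)"
proof
  assume \<phi>: "\<phi> \<in> dual_ball k N"
  have "\<bar>dot k \<phi> x\<bar> \<le> N x" if x: "x \<in> vec k" for x
  proof (cases "N x = 0")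
    case True then show ?thesis using eq_zero_imp[OF x] by simp
  next
    case False
    then have pos: "N x > 0" using nonneg[OF x] by simp
    define s where "s = 1 / N x"
    define y where "y = (\<lambda>i. s * x i)"
    have "y \<in> vec k"
      unfolding y_def by (rule vec_scale[OF x])
    moreover have "N y = 1"
      unfolding y_def using homogeneous[OF x, of s] pos by (simp add: s_def)
    ultimately
    have "\<bar>dot k \<phi> y\<bar> \<le> dual_norm k N \<phi>"
      unfolding dual_norm_def dot_def by (intro cSup_upper bdd_above_dual_norm_set) auto
    also have "\<dots> \<le> 1" using \<phi> by (simp add: dual_ball_def)
    finally have y_le: "\<bar>dot k \<phi> y\<bar> \<le> 1" .
    have "dot k \<phi> y = s * dot k \<phi> x"
      by (simp add: y_def dot_scale_right)
    then have "\<bar>dot k \<phi> x\<bar> = N x * \<bar>dot k \<phi> y\<bar>"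
      using pos by (simp add: s_def abs_mult)
    also have "\<dots> \<le> N x * 1"
      using y_le pos by (intro mult_left_mono) simp_all
    finally show ?thesis by simp
  qed
  then show "\<phi> \<in> vec k \<and> (\<forall>x\<in>vec k. \<bar>dot k \<phi> x\<bar> \<le> N x)"
    using \<phi> by (simp add: dual_ball_def)
next
  assume \<phi>: "\<phi> \<in> vec k \<and> (\<forall>x\<in>vec k. \<bar>dot k \<phi> x\<bar> \<le> N x)"
  have "dual_norm k N \<phi> \<le> 1"
    unfolding dual_norm_def
    by (rule cSup_least) (use \<phi> in \<open>fastforce simp: dot_def intro: exI[of _ "\<lambda>i. 0"]\<close>)+
  then show "\<phi> \<in> dual_ball k N" using \<phi> by (simp add: dual_ball_def)
qed

lemma dual_ball_vec: "\<phi> \<in> dual_ball k N \<Longrightarrow> \<phi> \<in> vec k"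
  using dual_ball_iff by blast

lemma dual_ball_le: "\<phi> \<in> dual_ball k N \<Longrightarrow> x \<in> vec k \<Longrightarrow> \<bar>dot k \<phi> x\<bar> \<le> N x"
  using dual_ball_iff by blast

lemma zero_in_dual_ball: "(\<lambda>i. 0) \<in> dual_ball k N"
  using dual_ball_iff nonneg by simp

lemma uminus_in_dual_ball: "\<phi> \<in> dual_ball k N \<Longrightarrow> - \<phi> \<in> dual_ball k N"
  using dual_ball_iff vec_uminus by simp

lemma compact_dual_ball: "compact (dual_ball k N)"
proof (rule compact_if_closed_in_box[where K="\<lambda>i. if i < k then {- N (basis_vec i) .. N (basis_vec i)} else {0}"])
  have "dual_ball k N = vec k \<inter> (\<Inter>x\<in>vec k. {\<phi>. \<bar>dot k \<phi> x\<bar> \<le> N x})"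
    using dual_ball_iff by blast
  then show "closed (dual_ball k N)"
    by (simp add: closed_Int closed_vec closed_INT closed_Collect_le continuous_intros continuous_on_dot_left)
  fix \<phi> i assume \<phi>: "\<phi> \<in> dual_ball k N"
  show "\<phi> i \<in> (if i < k then {- N (basis_vec i) .. N (basis_vec i)} else {0})"
  proof (cases "i < k")
    case True
    then show ?thesis
      using dual_ball_le[OF \<phi> basis_vec_in_vec[OF True]] by (simp add: dot_basis_vec abs_le_iff)
  qed (use dual_ball_vec[OF \<phi>] in \<open>simp add: vec_def\<close>)
qed simp

lemma closed_unit_ball: "closed (unit_ball k N)"
proof -
  have "unit_ball k N = vec k \<inter> N -` {..1}" by (auto simp: unit_ball_def)
  then show ?thesis using continuous_closed_preimage[OF continuous closed_vec] by simp
qed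

lemma convex_unit_ball: "convex_coord (unit_ball k N)"
  unfolding convex_coord_def unit_ball_def
proof (intro ballI allI impI)
  fix a b and t :: real
  assume ab: "a \<in> {x \<in> vec k. N x \<le> 1}" "b \<in> {x \<in> vec k. N x \<le> 1}" and t: "0 \<le> t \<and> t \<le> 1"
  then have "N (\<lambda>i. (1 - t) * a i + t * b i) \<le> N (\<lambda>i. (1 - t) * a i) + N (\<lambda>i. t * b i)"
    by (intro triangle vec_scale) simp_all
  also have "\<dots> = (1 - t) * N a + t * N b"
    using ab t homogeneous[of a "1 - t"] homogeneous[of b t] by simp
  also have "\<dots> \<le> (1 - t) * 1 + t * 1"
    using ab t by (intro add_mono mult_left_mono) auto
  finally show "(\<lambda>i. (1 - t) * a i + t * b i) \<in> {x \<in> vec k. N x \<le> 1}"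
    using ab by (simp add: vec_lincomb)
qed

lemma abs_dot_le_if_bounded_on_unit_ball:
  assumes z: "\<And>b. b \<in> unit_ball k N \<Longrightarrow> dot k z b < \<alpha>" and v: "v \<in> vec k"
  shows "\<bar>dot k z v\<bar> \<le> \<alpha> * N v"
proof (cases "N v = 0")
  case True then show ?thesis using eq_zero_imp[OF v] by simp
next
  case False
  then have pos: "N v > 0" using nonneg[OF v] by simp
  define s where "s = 1 / N v"
  define b where "b = (\<lambda>i. s * v i)"
  have "b \<in> vec k"
    unfolding b_def by (rule vec_scale[OF v])
  moreover have "N b = 1"
    unfolding b_def using homogeneous[OF v, of s] pos by (simp add: s_def)
  ultimately have "b \<in> unit_ball k N" "- b \<in> unit_ball k N"
    by (simp_all add: unit_ball_def vec_uminus uminus)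
  then have "\<bar>dot k z b\<bar> < \<alpha>"
    using z[of b] z[of "- b"] by (simp add: abs_less_iff)
  moreover have "dot k z b = s * dot k z v"
    by (simp add: b_def dot_scale_right)
  ultimately show ?thesis
    using pos by (simp add: s_def abs_mult field_simps)
qed

text \<open>Finite-dimensional Hahn--Banach, via the separation of \<open>w\<close> from the unit ball.\<close>
lemma dual_functional_beyond_unit_ball:
  assumes w: "w \<in> vec k" "1 < N w"
  shows "\<exists>\<psi>\<in>dual_ball k N. dot k \<psi> w = 1"
proof -
  have "w \<notin> unit_ball k N" "unit_ball k N \<subseteq> vec k" "(\<lambda>i. 0) \<in> unit_ball k N"
    using w by (auto simp: unit_ball_def)
  then obtain z where z: "z \<in> vec k" "\<And>b. b \<in> unit_ball k N \<Longrightarrow> dot k z b < dot k z w"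
    using separation[OF _ closed_unit_ball convex_unit_ball _ w(1)] by blast
  define \<alpha> where "\<alpha> = dot k z w"
  have \<alpha>: "\<alpha> > 0" using z(2)[of "\<lambda>i. 0"] by (simp add: unit_ball_def \<alpha>_def)
  define \<psi> where "\<psi> = (\<lambda>i. (1 / \<alpha>) * z i)"
  have bound: "\<bar>dot k z v\<bar> \<le> \<alpha> * N v" if "v \<in> vec k" for v
    by (rule abs_dot_le_if_bounded_on_unit_ball[OF _ that]) (simp add: z(2) \<alpha>_def)
  have "\<psi> \<in> dual_ball k N"
    unfolding dual_ball_iff
  proof (intro conjI ballI)
    show "\<psi> \<in> vec k" unfolding \<psi>_def by (rule vec_scale[OF z(1)])
    fix v assume v: "v \<in> vec k"
    have "\<bar>dot k \<psi> v\<bar> = \<bar>dot k z v\<bar> / \<alpha>"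
      unfolding \<psi>_def dot_scale_left using \<alpha> by (simp add: abs_mult)
    also have "\<dots> \<le> N v"
      using bound[OF v] \<alpha> by (simp add: pos_divide_le_eq mult.commute)
    finally show "\<bar>dot k \<psi> v\<bar> \<le> N v" .
  qed
  moreover have "dot k \<psi> w = 1"
    unfolding \<psi>_def dot_scale_left using \<alpha> by (simp add: \<alpha>_def)
  ultimately show ?thesis by blast
qed

lemma exists_extreme_norming_functional:
  assumes x: "x \<in> vec k"
  shows "\<exists>\<phi>. extreme_pt \<phi> (dual_ball k N) \<and> dot k \<phi> x = N x"
proof -
  obtain \<phi> where \<phi>: "extreme_pt \<phi> (dual_ball k N)"
    and max: "\<And>\<psi>. \<psi> \<in> dual_ball k N \<Longrightarrow> dot k \<psi> x \<le> dot k \<phi> x"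
    using exists_extreme_maximizer[of "dual_ball k N" k x] dual_ball_vec compact_dual_ball
      zero_in_dual_ball by blast
  have \<phi>_in: "\<phi> \<in> dual_ball k N" using \<phi> by (simp add: extreme_pt_def)
  have "N x \<le> dot k \<phi> x"
  proof (rule ccontr)
    assume less: "\<not> N x \<le> dot k \<phi> x"
    have "0 \<le> dot k \<phi> x" using max[OF zero_in_dual_ball] by simp
    define \<rho> where "\<rho> = (N x + dot k \<phi> x) / 2"
    have \<rho>: "0 < \<rho>" "dot k \<phi> x < \<rho>" "\<rho> < N x"
      using less \<open>0 \<le> dot k \<phi> x\<close> by (auto simp: \<rho>_def)
    define s where "s = 1 / \<rho>"
    have s: "0 < s" "s * \<rho> = 1" using \<rho> by (simp_all add: s_def)
    have "1 = s * \<rho>" using s by simp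
    also have "\<dots> < s * N x" using mult_strict_left_mono[OF \<rho>(3) s(1)] by simp
    also have "\<dots> = N (\<lambda>i. s * x i)" using homogeneous[OF x, of s] s by simp
    finally obtain \<psi> where \<psi>: "\<psi> \<in> dual_ball k N" "dot k \<psi> (\<lambda>i. s * x i) = 1"
      using dual_functional_beyond_unit_ball vec_scale[OF x] by blast
    then have "s * dot k \<psi> x = 1" by (simp add: dot_scale_right)
    then have "dot k \<psi> x = \<rho>" using \<rho>(1) by (simp add: s_def field_simps)
    then show False using max[OF \<psi>(1)] \<rho> by simp
  qed
  then show ?thesis using \<phi> dual_ball_le[OF \<phi>_in x] by auto
qed

end

section \<open>Absolutely convex hulls and norming families\<close>

definition lincomb :: "nat \<Rightarrow> (nat \<Rightarrow> nat \<Rightarrow> real) \<Rightarrow> (nat \<Rightarrow> real) \<Rightarrow> nat \<Rightarrow> real" where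
  "lincomb p \<psi> l = (\<lambda>i. \<Sum>j<p. l j * \<psi> j i)"

definition abs_hull :: "nat \<Rightarrow> (nat \<Rightarrow> nat \<Rightarrow> real) \<Rightarrow> (nat \<Rightarrow> real) set" where
  "abs_hull p \<psi> = {lincomb p \<psi> l | l. (\<Sum>j<p. \<bar>l j\<bar>) \<le> 1}"

definition norming_family :: "nat \<Rightarrow> ((nat \<Rightarrow> real) \<Rightarrow> real) \<Rightarrow> nat \<Rightarrow> (nat \<Rightarrow> nat \<Rightarrow> real) \<Rightarrow> bool"
  where "norming_family k N p \<psi> \<longleftrightarrow>
    (\<forall>j<p. \<psi> j \<in> dual_ball k N) \<and> (\<forall>x\<in>vec k. \<exists>j<p. \<bar>dot k (\<psi> j) x\<bar> = N x)"

lemma lincomb_cong: "(\<And>j. j < p \<Longrightarrow> l j = l' j) \<Longrightarrow> lincomb p \<psi> l = lincomb p \<psi> l'"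
  unfolding lincomb_def by (intro ext sum.cong) auto

lemma dot_lincomb: "dot k (lincomb p \<psi> l) x = (\<Sum>j<p. l j * dot k (\<psi> j) x)"
  unfolding dot_def lincomb_def
  by (simp add: sum_distrib_right sum_distrib_left mult.assoc sum.swap[where A="{..<k}"])

lemma lincomb_in_abs_hull: "(\<Sum>j<p. \<bar>l j\<bar>) \<le> 1 \<Longrightarrow> lincomb p \<psi> l \<in> abs_hull p \<psi>"
  unfolding abs_hull_def by blast

lemma lincomb_single: "j < p \<Longrightarrow> lincomb p \<psi> (\<lambda>i. if i = j then c else 0) = (\<lambda>i. c * \<psi> j i)"
  by (simp add: lincomb_def if_distrib[of "\<lambda>x. x * _"] cong: if_cong)

lemma scaled_generator_in_abs_hull:
  assumes "j < p" "\<bar>c\<bar> \<le> 1"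
  shows "(\<lambda>i. c * \<psi> j i) \<in> abs_hull p \<psi>"
proof -
  have "(\<Sum>i<p. \<bar>if i = j then c else 0\<bar>) \<le> 1"
    using assms by (simp add: if_distrib[of abs] cong: if_cong)
  then have "lincomb p \<psi> (\<lambda>i. if i = j then c else 0) \<in> abs_hull p \<psi>"
    by (rule lincomb_in_abs_hull)
  then show ?thesis
    using assms(1) by (simp add: lincomb_single)
qed

lemma abs_hull_subset_vec: "(\<And>j. j < p \<Longrightarrow> \<psi> j \<in> vec k) \<Longrightarrow> abs_hull p \<psi> \<subseteq> vec k"
  by (auto simp: abs_hull_def lincomb_def vec_def)

lemma convex_abs_hull: "convex_coord (abs_hull p \<psi>)"
  unfolding convex_coord_def
proof (intro ballI allI impI)
  fix a b and t :: real
  assume ab: "a \<in> abs_hull p \<psi>" "b \<in> abs_hull p \<psi>" and t: "0 \<le> t \<and> t \<le> 1"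
  obtain la lb where la: "a = lincomb p \<psi> la" "(\<Sum>j<p. \<bar>la j\<bar>) \<le> 1"
    and lb: "b = lincomb p \<psi> lb" "(\<Sum>j<p. \<bar>lb j\<bar>) \<le> 1"
    using ab by (auto simp: abs_hull_def)
  define l where "l j = (1 - t) * la j + t * lb j" for j
  have "(\<lambda>i. (1 - t) * a i + t * b i) = lincomb p \<psi> l"
  proof
    fix i
    have "(1 - t) * a i + t * b i = (\<Sum>j<p. (1 - t) * (la j * \<psi> j i) + t * (lb j * \<psi> j i))"
      by (simp add: la lb lincomb_def sum.distrib sum_distrib_left)
    also have "\<dots> = lincomb p \<psi> l i"
      by (simp add: lincomb_def l_def algebra_simps)
    finally show "(1 - t) * a i + t * b i = lincomb p \<psi> l i" .
  qed
  moreover have "(\<Sum>j<p. \<bar>l j\<bar>) \<le> (\<Sum>j<p. (1 - t) * \<bar>la j\<bar> + t * \<bar>lb j\<bar>)"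
    unfolding l_def using t
    by (intro sum_mono) (simp add: abs_triangle_ineq[THEN order_trans] abs_mult)
  moreover have "\<dots> = (1 - t) * (\<Sum>j<p. \<bar>la j\<bar>) + t * (\<Sum>j<p. \<bar>lb j\<bar>)"
    by (simp add: sum.distrib sum_distrib_left)
  moreover have "\<dots> \<le> (1 - t) * 1 + t * 1"
    using t la lb by (intro add_mono mult_left_mono) auto
  ultimately show "(\<lambda>i. (1 - t) * a i + t * b i) \<in> abs_hull p \<psi>"
    by (simp add: lincomb_in_abs_hull)
qed

lemma closed_abs_hull: "closed (abs_hull p \<psi>)"
proof -
  define L where "L = {l. (\<forall>j. l j \<in> (if j < p then {-1..1} else {0::real})) \<and> (\<Sum>j<p. \<bar>l j\<bar>) \<le> 1}"
  have "compact L"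
  proof (rule compact_if_closed_in_box[where K="\<lambda>j. if j < p then {-1..1} else {0}"])
    have "L = {l. \<forall>j. l j \<in> (if j < p then {-1..1} else {0})} \<inter> {l. (\<Sum>j<p. \<bar>l j\<bar>) \<le> 1}"
      by (auto simp: L_def)
    moreover have "closed {l. \<forall>j. l j \<in> (if j < p then {-1..1} else {0::real})}"
      by (intro compact_imp_closed compact_coordinate_box) simp
    moreover have "closed {l::nat \<Rightarrow> real. (\<Sum>j<p. \<bar>l j\<bar>) \<le> 1}"
      by (intro closed_Collect_le continuous_intros continuous_on_coordinate)
    ultimately show "closed L"
      by (simp add: closed_Int)
  qed (auto simp: L_def)
  moreover have "continuous_on L (lincomb p \<psi>)"
    unfolding lincomb_def
    by (intro continuous_on_coordinatewise_then_product continuous_intros continuous_on_coordinate)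
  moreover have "abs_hull p \<psi> = lincomb p \<psi> ` L"
  proof
    show "lincomb p \<psi> ` L \<subseteq> abs_hull p \<psi>"
      by (auto simp: L_def abs_hull_def)
    show "abs_hull p \<psi> \<subseteq> lincomb p \<psi> ` L"
    proof
      fix a assume "a \<in> abs_hull p \<psi>"
      then obtain l where l: "a = lincomb p \<psi> l" "(\<Sum>j<p. \<bar>l j\<bar>) \<le> 1"
        by (auto simp: abs_hull_def)
      define l' where "l' j = (if j < p then l j else 0)" for j
      have "\<bar>l j\<bar> \<le> 1" if "j < p" for j
        using member_le_sum[of j "{..<p}" "\<lambda>j. \<bar>l j\<bar>"] that l(2) by simp
      moreover have "(\<Sum>j<p. \<bar>l' j\<bar>) = (\<Sum>j<p. \<bar>l j\<bar>)"
        by (rule sum.cong) (simp_all add: l'_def)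
      ultimately have "l' \<in> L"
        using l(2) by (simp add: L_def l'_def abs_le_iff)
      moreover have "a = lincomb p \<psi> l'"
        unfolding l(1) by (rule lincomb_cong) (simp add: l'_def)
      ultimately show "a \<in> lincomb p \<psi> ` L" by blast
    qed
  qed
  ultimately show ?thesis
    using compact_continuous_image[of L "lincomb p \<psi>"] compact_imp_closed by simp
qed

context coord_norm
begin

lemma abs_hull_subset_dual_ball:
  assumes "\<And>j. j < p \<Longrightarrow> \<psi> j \<in> dual_ball k N"
  shows "abs_hull p \<psi> \<subseteq> dual_ball k N"
proof
  fix a assume a: "a \<in> abs_hull p \<psi>"
  then obtain l where l: "a = lincomb p \<psi> l" "(\<Sum>j<p. \<bar>l j\<bar>) \<le> 1"
    by (auto simp: abs_hull_def)
  have "\<bar>dot k a x\<bar> \<le> N x" if x: "x \<in> vec k" for x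
  proof -
    have "\<bar>dot k a x\<bar> \<le> (\<Sum>j<p. \<bar>l j\<bar> * \<bar>dot k (\<psi> j) x\<bar>)"
      unfolding l(1) dot_lincomb by (rule order_trans[OF sum_abs]) (simp add: abs_mult)
    also have "\<dots> \<le> (\<Sum>j<p. \<bar>l j\<bar> * N x)"
      using assms dual_ball_le[OF _ x] by (intro sum_mono mult_left_mono) auto
    also have "\<dots> \<le> N x"
      using l(2) nonneg[OF x] by (simp flip: sum_distrib_right) (intro mult_left_le_one_le sum_nonneg; simp)
    finally show ?thesis .
  qed
  moreover have "abs_hull p \<psi> \<subseteq> vec k"
    by (rule abs_hull_subset_vec) (rule dual_ball_vec[OF assms])
  then have "a \<in> vec k" using a by blast
  ultimately show "a \<in> dual_ball k N"
    by (simp add: dual_ball_iff)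
qed

text \<open>Separate a functional \<open>\<theta>\<close> outside the hull from the hull by a vector \<open>z\<close>, and test
  \<open>\<theta>\<close> against the member of the family that norms \<open>z\<close>.\<close>
lemma dual_ball_eq_abs_hull:
  assumes "norming_family k N p \<psi>"
  shows "dual_ball k N = abs_hull p \<psi>"
proof
  have \<psi>: "\<And>j. j < p \<Longrightarrow> \<psi> j \<in> dual_ball k N"
    and norming: "\<And>x. x \<in> vec k \<Longrightarrow> \<exists>j<p. \<bar>dot k (\<psi> j) x\<bar> = N x"
    using assms by (auto simp: norming_family_def)
  show "abs_hull p \<psi> \<subseteq> dual_ball k N"
    using \<psi> by (rule abs_hull_subset_dual_ball)
  show "dual_ball k N \<subseteq> abs_hull p \<psi>"
  proof
    fix \<theta> assume \<theta>: "\<theta> \<in> dual_ball k N"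
    show "\<theta> \<in> abs_hull p \<psi>"
    proof (rule ccontr)
      assume outside: "\<theta> \<notin> abs_hull p \<psi>"
      have "abs_hull p \<psi> \<subseteq> vec k"
        by (rule abs_hull_subset_vec) (rule dual_ball_vec[OF \<psi>])
      moreover have "abs_hull p \<psi> \<noteq> {}"
        using lincomb_in_abs_hull[where l="\<lambda>j. 0" and p=p and \<psi>=\<psi>] by auto
      ultimately have "\<exists>z\<in>vec k. \<forall>c\<in>abs_hull p \<psi>. dot k z c < dot k z \<theta>"
        using separation[OF _ closed_abs_hull convex_abs_hull _ dual_ball_vec[OF \<theta>] outside]
        by blast
      then obtain z where z: "z \<in> vec k" "\<And>c. c \<in> abs_hull p \<psi> \<Longrightarrow> dot k z c < dot k z \<theta>"
        by blast
      obtain j where j: "j < p" "\<bar>dot k (\<psi> j) z\<bar> = N z"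
        using norming[OF z(1)] by blast
      define \<sigma> where "\<sigma> = sgn (dot k (\<psi> j) z)"
      have "\<bar>\<sigma>\<bar> \<le> 1" by (simp add: \<sigma>_def abs_sgn_eq)
      then have "dot k z (\<lambda>i. \<sigma> * \<psi> j i) < dot k z \<theta>"
        using z(2) scaled_generator_in_abs_hull[OF j(1)] by blast
      moreover have "dot k z (\<lambda>i. \<sigma> * \<psi> j i) = \<sigma> * dot k (\<psi> j) z"
        by (simp add: dot_commute[of k z] dot_scale_left)
      moreover have "\<sigma> * dot k (\<psi> j) z = N z"
        using j(2) by (simp add: \<sigma>_def abs_sgn mult.commute)
      moreover have "dot k z \<theta> \<le> N z"
        using dual_ball_le[OF \<theta> z(1)] by (simp add: dot_commute)
      ultimately show False by simp
    qed
  qed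
qed

lemma norming_family_if_covers_extreme:
  assumes "\<And>j. j < p \<Longrightarrow> \<psi> j \<in> dual_ball k N"
    and "\<And>\<phi>. extreme_pt \<phi> (dual_ball k N) \<Longrightarrow> \<exists>j<p. \<phi> = \<psi> j \<or> \<phi> = - \<psi> j"
  shows "norming_family k N p \<psi>"
  unfolding norming_family_def
proof (intro conjI allI impI ballI)
  fix x assume x: "x \<in> vec k"
  obtain \<phi> where \<phi>: "extreme_pt \<phi> (dual_ball k N)" "dot k \<phi> x = N x"
    using exists_extreme_norming_functional[OF x] by blast
  obtain j where "j < p" "\<phi> = \<psi> j \<or> \<phi> = - \<psi> j"
    using assms(2)[OF \<phi>(1)] by blast
  moreover have "\<bar>dot k \<phi> x\<bar> = N x"
    using \<phi>(2) nonneg[OF x] by simp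
  ultimately show "\<exists>j<p. \<bar>dot k (\<psi> j) x\<bar> = N x"
    by auto
qed (use assms(1) in blast)

end

lemma lincomb_split_off:
  fixes l :: "nat \<Rightarrow> real" and \<psi> :: "nat \<Rightarrow> nat \<Rightarrow> real"
  assumes l: "(\<Sum>m<p. \<bar>l m\<bar>) \<le> 1" and j: "j < p"
  defines "w \<equiv> lincomb p \<psi> (\<lambda>m. if m = j then 0 else l m / (1 - \<bar>l j\<bar>))"
  shows "w \<in> abs_hull p \<psi>" and "lincomb p \<psi> l = (\<lambda>i. l j * \<psi> j i + (1 - \<bar>l j\<bar>) * w i)"
proof -
  define s where "s = \<bar>l j\<bar>"
  define A where "A = {..<p} - {j}"
  have sum_split: "(\<Sum>m<p. f m) = f j + (\<Sum>m\<in>A. f m)" for f :: "nat \<Rightarrow> real"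
    unfolding A_def using j by (simp add: sum.remove)
  have A_le: "(\<Sum>m\<in>A. \<bar>l m\<bar>) \<le> 1 - s"
    using l sum_split[of "\<lambda>m. \<bar>l m\<bar>"] by (simp add: s_def)
  moreover have A_nonneg: "0 \<le> (\<Sum>m\<in>A. \<bar>l m\<bar>)"
    by (rule sum_nonneg) simp
  ultimately have s_le: "s \<le> 1"
    by linarith
  have "(\<Sum>m<p. \<bar>if m = j then 0 else l m / (1 - s)\<bar>) = (\<Sum>m\<in>A. \<bar>l m\<bar>) / (1 - s)"
    using s_le by (simp add: sum_split A_def sum_divide_distrib abs_divide)
  also have "\<dots> \<le> 1"
    using A_le s_le by (cases "s = 1") (simp_all add: divide_le_eq_1)
  finally show "w \<in> abs_hull p \<psi>"
    unfolding w_def s_def[symmetric] by (rule lincomb_in_abs_hull)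
  text \<open>For \<open>s = 1\<close> all other coefficients vanish, so the division by zero in \<open>w\<close> is harmless.\<close>
  have cancel: "(1 - s) * (l m / (1 - s)) = l m" if "m \<in> A" for m
  proof (cases "s = 1")
    case True
    then have "(\<Sum>m\<in>A. \<bar>l m\<bar>) = 0"
      using A_le A_nonneg by linarith
    then show ?thesis using that by (simp add: A_def sum_nonneg_eq_0_iff)
  qed simp
  show "lincomb p \<psi> l = (\<lambda>i. l j * \<psi> j i + (1 - \<bar>l j\<bar>) * w i)"
  proof
    fix i
    have "w i = (\<Sum>m\<in>A. l m / (1 - s) * \<psi> m i)"
      unfolding w_def lincomb_def sum_split s_def[symmetric] by (simp add: A_def)
    then have "(1 - s) * w i = (\<Sum>m\<in>A. ((1 - s) * (l m / (1 - s))) * \<psi> m i)"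
      by (simp only: sum_distrib_left mult.assoc)
    also have "\<dots> = (\<Sum>m\<in>A. l m * \<psi> m i)"
      using cancel by (intro sum.cong) simp_all
    finally show "lincomb p \<psi> l i = l j * \<psi> j i + (1 - \<bar>l j\<bar>) * w i"
      by (simp add: lincomb_def sum_split s_def)
  qed
qed

lemma abs_hull_split:
  assumes "\<phi> \<in> abs_hull p \<psi>" and "\<phi> \<noteq> (\<lambda>i. 0)"
  obtains j \<sigma> s w where "j < p" "\<bar>\<sigma>\<bar> = 1" "0 < s" "s \<le> 1" "w \<in> abs_hull p \<psi>"
    "\<phi> = (\<lambda>i. s * (\<sigma> * \<psi> j i) + (1 - s) * w i)"
proof -
  obtain l where l: "\<phi> = lincomb p \<psi> l" "(\<Sum>j<p. \<bar>l j\<bar>) \<le> 1"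
    using assms(1) by (auto simp: abs_hull_def)
  obtain j where j: "j < p" "l j \<noteq> 0"
  proof (rule ccontr)
    assume "\<not> thesis"
    with that have "\<forall>j<p. l j = 0" by blast
    then have "\<phi> = (\<lambda>i. 0)" by (simp add: l(1) lincomb_def)
    with assms(2) show False by simp
  qed
  have "\<bar>l j\<bar> \<le> 1"
    using member_le_sum[of j "{..<p}" "\<lambda>m. \<bar>l m\<bar>"] j(1) l(2) by simp
  define w where "w = lincomb p \<psi> (\<lambda>m. if m = j then 0 else l m / (1 - \<bar>l j\<bar>))"
  have w: "w \<in> abs_hull p \<psi>" "\<phi> = (\<lambda>i. l j * \<psi> j i + (1 - \<bar>l j\<bar>) * w i)"
    using lincomb_split_off[OF l(2) j(1), where \<psi>=\<psi>] by (simp_all add: w_def l(1))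
  have "\<phi> = (\<lambda>i. \<bar>l j\<bar> * (sgn (l j) * \<psi> j i) + (1 - \<bar>l j\<bar>) * w i)"
    unfolding w(2) by (simp add: mult.assoc[symmetric] abs_mult_sgn)
  then show ?thesis
    using that[OF j(1) _ _ _ w(1), where \<sigma>="sgn (l j)" and s="\<bar>l j\<bar>"] \<open>\<bar>l j\<bar> \<le> 1\<close> j(2)
    by (simp add: abs_sgn_eq)
qed

lemma extreme_pt_in_abs_hull:
  assumes S: "abs_hull p \<psi> \<subseteq> S" and \<phi>: "extreme_pt \<phi> S" "\<phi> \<in> abs_hull p \<psi>" "\<phi> \<noteq> (\<lambda>i. 0)"
  shows "\<exists>j<p. \<phi> = \<psi> j \<or> \<phi> = - \<psi> j"
proof -
  obtain j \<sigma> s w where j: "j < p" "\<bar>\<sigma>\<bar> = 1" "0 < s" "s \<le> 1" "w \<in> abs_hull p \<psi>"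
    and \<phi>_eq: "\<phi> = (\<lambda>i. s * (\<sigma> * \<psi> j i) + (1 - s) * w i)"
    using abs_hull_split[OF \<phi>(2,3)] by blast
  define u where "u = (\<lambda>i. \<sigma> * \<psi> j i)"
  have "u \<in> S"
    using S scaled_generator_in_abs_hull[OF j(1)] j(2) by (auto simp: u_def)
  moreover have "\<sigma> = 1 \<or> \<sigma> = -1"
    using j(2) by (cases "\<sigma> \<ge> 0") auto
  then have "u = \<psi> j \<or> u = - \<psi> j"
    by (auto simp: u_def fun_Compl_def)
  ultimately have u: "u \<in> S" "u = \<psi> j \<or> u = - \<psi> j" by blast+
  have \<phi>_u: "\<phi> = (\<lambda>i. s * u i + (1 - s) * w i)"
    by (simp add: \<phi>_eq u_def)
  have "\<phi> = u"
  proof (cases "s = 1")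
    case False
    have "w \<in> S" using S j(5) by blast
    have "u = w"
      by (rule extreme_ptD[OF \<phi>(1) u(1) \<open>w \<in> S\<close>, where t="1 - s"])
        (use j(3,4) False in \<open>simp_all add: \<phi>_eq u_def\<close>)
    then show ?thesis by (simp add: \<phi>_u algebra_simps)
  qed (simp add: \<phi>_eq u_def)
  then show ?thesis using u(2) j(1) by blast
qed

section \<open>Representatives of the extreme points up to sign\<close>

definition leading_pos :: "(nat \<Rightarrow> real) \<Rightarrow> bool" where
  "leading_pos \<phi> \<longleftrightarrow> 0 < \<phi> (LEAST i. \<phi> i \<noteq> 0)"

lemma leading_pos_uminus:
  assumes "\<phi> \<noteq> (\<lambda>i. 0)"
  shows "leading_pos (- \<phi>) \<longleftrightarrow> \<not> leading_pos \<phi>"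
proof -
  have "\<exists>i. \<phi> i \<noteq> 0" using assms by auto
  then have "\<phi> (LEAST i. \<phi> i \<noteq> 0) \<noteq> 0" by (rule LeastI_ex)
  then show ?thesis by (auto simp: leading_pos_def)
qed

definition represents_up_to_sign :: "nat \<Rightarrow> (nat \<Rightarrow> real) set \<Rightarrow> (nat \<Rightarrow> nat \<Rightarrow> real) \<Rightarrow> bool"
  where "represents_up_to_sign d E rep \<longleftrightarrow>
    (\<forall>i<d. rep i \<in> E) \<and> (\<forall>\<phi>\<in>E. \<exists>i<d. \<phi> = rep i \<or> \<phi> = - rep i) \<and>
    (\<forall>i<d. \<forall>j<d. rep i = rep j \<or> rep i = - rep j \<longrightarrow> i = j)"

lemma leading_pos_half_flip:
  assumes E: "(\<lambda>i. 0) \<notin> E" "\<And>\<phi>. \<phi> \<in> E \<Longrightarrow> - \<phi> \<in> E" and \<phi>: "\<phi> \<in> E"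
  shows "\<phi> \<in> {\<psi>\<in>E. leading_pos \<psi>} \<longleftrightarrow> - \<phi> \<notin> {\<psi>\<in>E. leading_pos \<psi>}"
proof -
  have "\<phi> \<noteq> (\<lambda>i. 0)" using \<phi> E(1) by auto
  then show ?thesis
    using leading_pos_uminus \<phi> E(2)[OF \<phi>] by simp
qed

lemma card_leading_pos_half:
  assumes fin: "finite E" and E: "(\<lambda>i. 0) \<notin> E" "\<And>\<phi>. \<phi> \<in> E \<Longrightarrow> - \<phi> \<in> E"
  shows "card E = 2 * card {\<phi>\<in>E. leading_pos \<phi>}"
proof -
  define R where "R = {\<phi>\<in>E. leading_pos \<phi>}"
  have flip: "\<phi> \<in> R \<longleftrightarrow> - \<phi> \<notin> R" if "\<phi> \<in> E" for \<phi>
    unfolding R_def using E that by (rule leading_pos_half_flip)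
  have "E \<subseteq> R \<union> uminus ` R"
  proof
    fix \<phi> assume \<phi>: "\<phi> \<in> E"
    show "\<phi> \<in> R \<union> uminus ` R"
    proof (cases "\<phi> \<in> R")
      case False
      then have "- (- \<phi>) \<in> uminus ` R" using flip[OF \<phi>] by blast
      then show ?thesis by simp
    qed simp
  qed
  moreover have "R \<union> uminus ` R \<subseteq> E"
    using E(2) by (auto simp: R_def)
  ultimately have "E = R \<union> uminus ` R" by (rule antisym)
  moreover have "finite R" using fin by (simp add: R_def)
  moreover have "R \<inter> uminus ` R = {}"
    using flip by (auto simp: R_def)
  moreover have "inj_on uminus R"
    by (simp add: inj_on_def fun_eq_iff)
  ultimately have "card E = 2 * card R"
    by (simp add: card_Un_disjoint card_image)
  then show ?thesis by (simp add: R_def)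
qed

lemma exists_represents_up_to_sign:
  assumes fin: "finite E" and E: "(\<lambda>i. 0) \<notin> E" "\<And>\<phi>. \<phi> \<in> E \<Longrightarrow> - \<phi> \<in> E" and card: "card E = 2 * d"
  shows "\<exists>rep. represents_up_to_sign d E rep"
proof -
  define R where "R = {\<phi>\<in>E. leading_pos \<phi>}"
  have flip: "\<phi> \<in> R \<longleftrightarrow> - \<phi> \<notin> R" if "\<phi> \<in> E" for \<phi>
    unfolding R_def using E that by (rule leading_pos_half_flip)
  have "card R = d"
    using card_leading_pos_half[OF fin E] card by (simp add: R_def)
  then obtain h where h: "bij_betw h {..<d} R"
    using ex_bij_betw_nat_finite[of R] fin by (auto simp: R_def atLeast0LessThan)
  then have hR: "h i \<in> R" if "i < d" for i
    using that by (auto simp: bij_betw_def)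
  have "\<exists>i<d. \<phi> = h i \<or> \<phi> = - h i" if "\<phi> \<in> E" for \<phi>
  proof -
    have "\<phi> \<in> R \<or> - \<phi> \<in> R" using flip[OF that] by blast
    then obtain \<psi> where "\<psi> \<in> R" "\<phi> = \<psi> \<or> \<phi> = - \<psi>" by force
    then show ?thesis using h by (auto simp: bij_betw_def)
  qed
  moreover have "i = j" if ij: "i < d" "j < d" "h i = h j \<or> h i = - h j" for i j
  proof -
    have "h j \<in> E" using hR[OF ij(2)] by (simp add: R_def)
    then have "h i \<noteq> - h j" using flip[of "h j"] hR[OF ij(1)] hR[OF ij(2)] by auto
    then show ?thesis using ij h by (auto simp: bij_betw_def inj_on_def)
  qed
  ultimately have "represents_up_to_sign d E h"
    using hR by (auto simp: represents_up_to_sign_def R_def)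
  then show ?thesis by blast
qed

lemma Pol_coord_norm: "Pol d k N \<Longrightarrow> coord_norm k N"
  by (simp add: Pol_def polyhedral_def coord_norm_def)

lemma Pol_represents_up_to_sign:
  assumes P: "Pol d k N" and d: "0 < d"
  shows "\<not> extreme_pt (\<lambda>i. 0) (dual_ball k N)"
    and "\<exists>rep. represents_up_to_sign d {\<phi>. extreme_pt \<phi> (dual_ball k N)} rep"
proof -
  interpret coord_norm k N using P by (rule Pol_coord_norm)
  define E where "E = {\<phi>. extreme_pt \<phi> (dual_ball k N)}"
  have fin: "finite E" and card: "card E = 2 * d"
    using P by (simp_all add: Pol_def E_def)
  show zero: "\<not> extreme_pt (\<lambda>i. 0) (dual_ball k N)"
  proof
    assume "extreme_pt (\<lambda>i. 0) (dual_ball k N)"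
    then have "E \<subseteq> {\<lambda>i. 0}"
      using extreme_pt_zero_symmetric[OF uminus_in_dual_ball] by (auto simp: E_def dest: extreme_pt_in)
    then have "card E \<le> 1"
      using card_mono[of "{\<lambda>i. 0}" E] by simp
    then show False using card d by simp
  qed
  have "\<exists>rep. represents_up_to_sign d E rep"
  proof (rule exists_represents_up_to_sign[OF fin _ _ card])
    show "(\<lambda>i. 0) \<notin> E" using zero by (simp add: E_def)
  qed (simp add: E_def extreme_pt_uminus uminus_in_dual_ball)
  then show "\<exists>rep. represents_up_to_sign d {\<phi>. extreme_pt \<phi> (dual_ball k N)} rep"
    by (simp add: E_def)
qed

lemma (in coord_norm) norming_family_if_represents:
  "represents_up_to_sign d {\<phi>. extreme_pt \<phi> (dual_ball k N)} rep \<Longrightarrow> norming_family k N d rep"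
  by (rule norming_family_if_covers_extreme) (auto simp: represents_up_to_sign_def dest: extreme_pt_in)

section \<open>Matrices and isometric embeddings\<close>

lemma mapply_mcomp: "mapply a (mcomp b X Y) x = mapply b X (mapply a Y x)"
  unfolding mapply_def mcomp_def
  by (rule ext) (simp add: sum_distrib_left sum_distrib_right mult.assoc sum.swap[where A="{..<a}"])

lemma mcomp_assoc: "mcomp a (mcomp b X Y) Z = mcomp b X (mcomp a Y Z)"
  unfolding mcomp_def
  by (intro ext) (simp add: sum_distrib_left sum_distrib_right mult.assoc sum.swap[where A="{..<a}"])

lemma mcomp_diff_left: "(\<lambda>i j. mcomp b S Y i j - mcomp b T Y i j) = mcomp b (\<lambda>i j. S i j - T i j) Y"
  unfolding mcomp_def by (intro ext) (simp add: sum_subtractf left_diff_distrib)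

lemma mapply_in_vec: "is_mat l k A \<Longrightarrow> mapply k A x \<in> vec l"
  unfolding is_mat_def mapply_def vec_def by auto

lemma Emb_is_mat: "A \<in> Emb k N l M \<Longrightarrow> is_mat l k A"
  by (simp add: Emb_def)

lemma Emb_isometric: "A \<in> Emb k N l M \<Longrightarrow> x \<in> vec k \<Longrightarrow> M (mapply k A x) = N x"
  by (simp add: Emb_def)

lemma mcomp_in_Emb:
  assumes X: "X \<in> Emb b M c P" and Y: "Y \<in> Emb a N b M"
  shows "mcomp b X Y \<in> Emb a N c P"
  unfolding Emb_def
proof (intro CollectI conjI ballI)
  show "is_mat c a (mcomp b X Y)"
    using Emb_is_mat[OF X] Emb_is_mat[OF Y] by (auto simp: is_mat_def mcomp_def)
  fix x assume x: "x \<in> vec a"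
  have "P (mapply a (mcomp b X Y) x) = M (mapply a Y x)"
    using Emb_isometric[OF X mapply_in_vec[OF Emb_is_mat[OF Y]]] by (simp add: mapply_mcomp)
  also have "\<dots> = N x" using Emb_isometric[OF Y x] .
  finally show "P (mapply a (mcomp b X Y) x) = N x" .
qed

definition rows_mat :: "nat \<Rightarrow> nat \<Rightarrow> (nat \<Rightarrow> nat \<Rightarrow> real) \<Rightarrow> nat \<Rightarrow> nat \<Rightarrow> real" where
  "rows_mat d k \<rho> = (\<lambda>i j. if i < d \<and> j < k then \<rho> i j else 0)"

lemma mapply_rows_mat: "mapply k (rows_mat d k \<rho>) x = (\<lambda>i. if i < d then dot k (\<rho> i) x else 0)"
  unfolding mapply_def rows_mat_def dot_def by (rule ext) auto

lemma (in coord_norm) rows_mat_in_Emb: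
  assumes "norming_family k N d \<rho>"
  shows "rows_mat d k \<rho> \<in> Emb k N d (linf d)"
  unfolding Emb_def
proof (intro CollectI conjI ballI)
  show "is_mat d k (rows_mat d k \<rho>)" by (simp add: is_mat_def rows_mat_def)
  fix x assume x: "x \<in> vec k"
  have \<rho>: "\<And>i. i < d \<Longrightarrow> \<rho> i \<in> dual_ball k N" and "\<exists>j<d. \<bar>dot k (\<rho> j) x\<bar> = N x"
    using assms x by (auto simp: norming_family_def)
  then obtain j where j: "j < d" "\<bar>dot k (\<rho> j) x\<bar> = N x" by blast
  show "linf d (mapply k (rows_mat d k \<rho>) x) = N x"
  proof (rule antisym)
    show "linf d (mapply k (rows_mat d k \<rho>) x) \<le> N x"
      using nonneg[OF x] dual_ball_le[OF \<rho> x] by (intro linf_leI) (auto simp: mapply_rows_mat)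
    show "N x \<le> linf d (mapply k (rows_mat d k \<rho>) x)"
      using abs_le_linf[OF j(1), of "mapply k (rows_mat d k \<rho>) x"] j by (simp add: mapply_rows_mat)
  qed
qed

section \<open>Isometric embeddings between sup-norm spaces\<close>

lemma linf_mapply_le_sum:
  assumes "linf d y \<le> 1"
  shows "linf n (mapply d A y) \<le> (\<Sum>i<n. \<Sum>j<d. \<bar>A i j\<bar>)"
proof (rule linf_leI)
  fix i assume i: "i < n"
  have "\<bar>mapply d A y i\<bar> \<le> (\<Sum>j<d. \<bar>A i j\<bar> * \<bar>y j\<bar>)"
    unfolding mapply_def by (rule order_trans[OF sum_abs]) (simp add: abs_mult)
  also have "\<dots> \<le> (\<Sum>j<d. \<bar>A i j\<bar>)"
    using assms by (intro sum_mono mult_left_le) (auto intro: order_trans[OF abs_le_linf[of _ d y]])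
  also have "\<dots> \<le> (\<Sum>i<n. \<Sum>j<d. \<bar>A i j\<bar>)"
    using i by (intro member_le_sum sum_nonneg) auto
  finally show "\<bar>mapply d A y i\<bar> \<le> (\<Sum>i<n. \<Sum>j<d. \<bar>A i j\<bar>)" .
qed (intro sum_nonneg; simp)

lemma opdist_mcomp_right_le:
  assumes Y: "Y \<in> Emb a N d (linf d)"
  shows "opdist a N (linf n) (mcomp d S Y) (mcomp d T Y) \<le> opdist d (linf d) (linf n) S T"
  unfolding opdist_def
proof (rule cSup_subset_mono)
  have "N (\<lambda>i. 0) = 0"
    using Emb_isometric[OF Y zero_in_vec] by (simp add: mapply_def linf_def)
  then show "{linf n (mapply a (\<lambda>i j. mcomp d S Y i j - mcomp d T Y i j) x) |x. x \<in> vec a \<and> N x \<le> 1} \<noteq> {}"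
    by (auto intro!: exI[of _ "\<lambda>i. 0"])
  show "bdd_above {linf n (mapply d (\<lambda>i j. S i j - T i j) x) |x. x \<in> vec d \<and> linf d x \<le> 1}"
    by (rule bdd_aboveI[of _ "\<Sum>i<n. \<Sum>j<d. \<bar>S i j - T i j\<bar>"]) (auto intro: linf_mapply_le_sum)
  show "{linf n (mapply a (\<lambda>i j. mcomp d S Y i j - mcomp d T Y i j) x) |x. x \<in> vec a \<and> N x \<le> 1}
      \<subseteq> {linf n (mapply d (\<lambda>i j. S i j - T i j) x) |x. x \<in> vec d \<and> linf d x \<le> 1}"
  proof clarify
    fix x assume x: "x \<in> vec a" "N x \<le> 1"
    then show "\<exists>y. linf n (mapply a (\<lambda>i j. mcomp d S Y i j - mcomp d T Y i j) x)
        = linf n (mapply d (\<lambda>i j. S i j - T i j) y) \<and> y \<in> vec d \<and> linf d y \<le> 1"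
      using Emb_isometric[OF Y x(1)] mapply_in_vec[OF Emb_is_mat[OF Y]]
      by (intro exI[of _ "mapply a Y x"]) (simp add: mcomp_diff_left mapply_mcomp)
  qed
qed

lemma linf_Emb_intro:
  assumes "is_mat m d V"
    and rows: "\<And>j. j < m \<Longrightarrow> (\<Sum>i<d. \<bar>V j i\<bar>) \<le> 1"
    and copies: "\<And>i. i < d \<Longrightarrow> \<exists>j<m. \<exists>\<sigma>. \<bar>\<sigma>\<bar> = 1 \<and> (\<forall>i'<d. V j i' = (if i' = i then \<sigma> else 0))"
  shows "V \<in> Emb d (linf d) m (linf m)"
  unfolding Emb_def
proof (intro CollectI conjI ballI assms(1) antisym)
  fix y assume y: "y \<in> vec d"
  show "linf m (mapply d V y) \<le> linf d y"
  proof (rule linf_leI[OF linf_nonneg])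
    fix j assume j: "j < m"
    have "\<bar>mapply d V y j\<bar> \<le> (\<Sum>i<d. \<bar>V j i\<bar> * linf d y)"
      unfolding mapply_def
      by (rule order_trans[OF sum_abs]) (auto simp: abs_mult intro!: sum_mono mult_left_mono abs_le_linf)
    also have "\<dots> \<le> linf d y"
      using rows[OF j] linf_nonneg[of d y]
      by (simp flip: sum_distrib_right) (intro mult_left_le_one_le sum_nonneg; simp)
    finally show "\<bar>mapply d V y j\<bar> \<le> linf d y" .
  qed
  show "linf d y \<le> linf m (mapply d V y)"
  proof (rule linf_leI[OF linf_nonneg])
    fix i assume i: "i < d"
    obtain j \<sigma> where j: "j < m" "\<bar>\<sigma>\<bar> = 1" "\<forall>i'<d. V j i' = (if i' = i then \<sigma> else 0)"
      using copies[OF i] by blast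
    have "mapply d V y j = (\<Sum>i'<d. if i' = i then \<sigma> * y i' else 0)"
      unfolding mapply_def using j(3) by (intro sum.cong) auto
    then have "\<bar>y i\<bar> = \<bar>mapply d V y j\<bar>"
      using i j(2) by (simp add: abs_mult)
    also have "\<dots> \<le> linf m (mapply d V y)"
      using j(1) by (rule abs_le_linf)
    finally show "\<bar>y i\<bar> \<le> linf m (mapply d V y)" .
  qed
qed

lemma linf_Emb_row_sum_le:
  assumes V: "V \<in> Emb m (linf m) n (linf n)" and j: "j < n"
  shows "(\<Sum>l<m. \<bar>V j l\<bar>) \<le> 1"
proof -
  define y where "y l = (if l < m then sgn (V j l) else 0)" for l
  have y: "y \<in> vec m" "linf m y \<le> 1"
    by (auto simp: y_def vec_def abs_sgn_eq intro: linf_leI)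
  have "(\<Sum>l<m. \<bar>V j l\<bar>) = mapply m V y j"
    unfolding mapply_def by (rule sum.cong) (auto simp: y_def abs_sgn mult.commute)
  also have "\<dots> \<le> linf n (mapply m V y)"
    using abs_le_linf[OF j] by (rule order_trans[OF abs_ge_self])
  also have "\<dots> \<le> 1"
    using Emb_isometric[OF V y(1)] y(2) by simp
  finally show ?thesis .
qed

lemma linf_Emb_column_unit:
  assumes V: "V \<in> Emb m (linf m) n (linf n)" and i: "i < m"
  shows "\<exists>j<n. \<bar>V j i\<bar> = 1"
proof -
  have "linf n (mapply m V (basis_vec i)) = 1"
    using Emb_isometric[OF V basis_vec_in_vec[OF i]] linf_basis_vec[OF i] by simp
  then obtain j where "j < n" "\<bar>mapply m V (basis_vec i) j\<bar> = 1"
    using linf_attained[of n "mapply m V (basis_vec i)"] by auto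
  moreover have "mapply m V (basis_vec i) j = V j i"
    using dot_basis_vec[OF i, of "V j"] by (simp add: mapply_def dot_def)
  ultimately show ?thesis by auto
qed

text \<open>Distinct columns of an \<open>\<ell>\<^sub>\<infinity>\<close>-isometry attain modulus one in distinct rows, since every
  row has \<open>\<ell>\<^sub>1\<close>-norm at most one.\<close>
lemma linf_Emb_dim_le:
  assumes V: "V \<in> Emb m (linf m) n (linf n)"
  shows "m \<le> n"
proof -
  obtain g where g: "\<And>i. i < m \<Longrightarrow> g i < n \<and> \<bar>V (g i) i\<bar> = 1"
    using linf_Emb_column_unit[OF V] by metis
  have "inj_on g {..<m}"
  proof (rule inj_onI, rule ccontr)
    fix i i' assume ii: "i \<in> {..<m}" "i' \<in> {..<m}" "g i = g i'" "i \<noteq> i'"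
    have "2 = (\<Sum>l\<in>{i, i'}. \<bar>V (g i) l\<bar>)"
      using g[of i] g[of i'] ii by simp
    also have "\<dots> \<le> (\<Sum>l<m. \<bar>V (g i) l\<bar>)"
      using ii by (intro sum_mono2) auto
    also have "\<dots> \<le> 1"
      using linf_Emb_row_sum_le[OF V] g ii(1) by simp
    finally show False by simp
  qed
  moreover have "g ` {..<m} \<subseteq> {..<n}" using g by auto
  ultimately show ?thesis
    using card_inj_on_le[of g "{..<m}" "{..<n}"] by simp
qed

section \<open>The space \<open>\<ell>\<^sub>\<infinity>\<^sup>d\<close> belongs to \<open>Pol\<^sub>d\<close>\<close>

lemma extreme_linf_unit_ball_coord:
  assumes x: "extreme_pt x (unit_ball d (linf d))" and i: "i < d"
  shows "x i \<in> {-1, 1}"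
proof (rule ccontr)
  have xB: "x \<in> vec d" "linf d x \<le> 1"
    using extreme_pt_in[OF x] by (auto simp: unit_ball_def)
  assume "x i \<notin> {-1, 1}"
  moreover have "\<bar>x i\<bar> \<le> 1" using abs_le_linf[OF i, of x] xB(2) by simp
  ultimately have \<delta>: "0 < 1 - \<bar>x i\<bar>" by (auto simp: abs_if split: if_splits)
  have shift: "(\<lambda>l. x l + c * basis_vec i l) \<in> unit_ball d (linf d)" if c: "\<bar>c\<bar> = 1 - \<bar>x i\<bar>" for c
  proof -
    have "linf d (\<lambda>l. x l + c * basis_vec i l) \<le> 1"
    proof (rule linf_leI)
      fix l assume l: "l < d"
      show "\<bar>x l + c * basis_vec i l\<bar> \<le> 1"
      proof (cases "l = i")
        case True
        have "\<bar>x i + c\<bar> \<le> \<bar>x i\<bar> + \<bar>c\<bar>" by (rule abs_triangle_ineq)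
        with c True show ?thesis by (simp add: basis_vec_def)
      next
        case False
        then show ?thesis using abs_le_linf[OF l, of x] xB(2) by (simp add: basis_vec_def)
      qed
    qed simp
    then show ?thesis
      using xB(1) i by (simp add: unit_ball_def vec_def basis_vec_def)
  qed
  have "(\<lambda>l. x l + (1 - \<bar>x i\<bar>) * basis_vec i l) = (\<lambda>l. x l + - (1 - \<bar>x i\<bar>) * basis_vec i l)"
    using \<delta> by (intro extreme_ptD[OF x shift shift, where t="1/2"]) (simp_all add: algebra_simps)
  from fun_cong[OF this, of i] have "1 - \<bar>x i\<bar> = - (1 - \<bar>x i\<bar>)"
    by (simp add: basis_vec_def)
  then show False using \<delta> by simp
qed

lemma finite_extreme_linf_unit_ball: "finite {x. extreme_pt x (unit_ball d (linf d))}"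
proof (rule finite_subset)
  show "{x. extreme_pt x (unit_ball d (linf d))}
      \<subseteq> {x. \<forall>i. (i \<in> {..<d} \<longrightarrow> x i \<in> {-1, 1}) \<and> (i \<notin> {..<d} \<longrightarrow> x i = 0)}"
  proof clarify
    fix x i assume x: "extreme_pt x (unit_ball d (linf d))"
    show "(i \<in> {..<d} \<longrightarrow> x i \<in> {-1, 1}) \<and> (i \<notin> {..<d} \<longrightarrow> x i = 0)"
      using extreme_linf_unit_ball_coord[OF x, of i] extreme_pt_in[OF x] by (simp add: unit_ball_def vec_def)
  qed
qed (rule finite_set_of_finite_funs; simp)

lemma norming_family_basis_vec: "0 < d \<Longrightarrow> norming_family d (linf d) d basis_vec"
  unfolding norming_family_def
proof (intro conjI allI impI ballI)
  fix i assume "i < d"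
  then show "basis_vec i \<in> dual_ball d (linf d)"
    by (simp add: linf.dual_ball_iff basis_vec_in_vec dot_commute[of d "basis_vec i"] dot_basis_vec
        abs_le_linf)
next
  fix x assume "0 < d" "x \<in> vec d"
  then obtain j where "j < d" "\<bar>x j\<bar> = linf d x"
    using linf_attained[of d x] abs_le_linf[of 0 d x] linf_nonneg[of d x] by fastforce
  then show "\<exists>j<d. \<bar>dot d (basis_vec j) x\<bar> = linf d x"
    by (auto simp: dot_commute[of d "basis_vec _"] dot_basis_vec)
qed

lemma linf_dual_ball_eq_basis_vec:
  assumes a: "a \<in> dual_ball d (linf d)" and i: "i < d" "a i = 1"
  shows "a = basis_vec i"
proof (rule vec_eqI[OF linf.dual_ball_vec[OF a] basis_vec_in_vec[OF i(1)]])
  fix l assume l: "l < d"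
  show "a l = basis_vec i l"
  proof (cases "l = i")
    case False
    define x where "x m = 1 * basis_vec i m + sgn (a l) * basis_vec l m" for m
    have "x \<in> vec d" "linf d x \<le> 1"
      using i(1) l False by (auto simp: x_def vec_def basis_vec_def abs_sgn_eq intro!: linf_leI)
    moreover have "dot d a x = 1 + \<bar>a l\<bar>"
      unfolding x_def dot_lincomb_right using i l by (simp add: dot_basis_vec abs_sgn mult.commute)
    ultimately have "1 + \<bar>a l\<bar> \<le> 1"
      using linf.dual_ball_le[OF a] by (metis abs_ge_self order_trans)
    then show ?thesis using False by (simp add: basis_vec_def)
  qed (simp add: i basis_vec_def)
qed

lemma basis_vec_extreme_linf_dual_ball:
  assumes i: "i < d"
  shows "extreme_pt (basis_vec i) (dual_ball d (linf d))"
  unfolding extreme_pt_def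
proof (intro conjI ballI allI impI)
  have "0 < d" using i by simp
  then show "basis_vec i \<in> dual_ball d (linf d)"
    using norming_family_basis_vec i by (simp add: norming_family_def)
  fix a b t assume ab: "a \<in> dual_ball d (linf d)" "b \<in> dual_ball d (linf d)"
    and t: "0 < t \<and> t < 1 \<and> basis_vec i = (\<lambda>l. (1 - t) * a l + t * b l)"
  have le1: "c i \<le> 1" if "c \<in> dual_ball d (linf d)" for c
    using linf.dual_ball_le[OF that basis_vec_in_vec[OF i]] linf_basis_vec[OF i]
    by (simp add: dot_basis_vec[OF i])
  have "1 = (1 - t) * a i + t * b i"
    using fun_cong[OF t[THEN conjunct2, THEN conjunct2], of i] by (simp add: basis_vec_def)
  then have "a i = 1 \<and> b i = 1"
    using t le1[OF ab(1)] le1[OF ab(2)] by (intro convex_comb_eq_upper_bound) simp_all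
  then show "a = b"
    using linf_dual_ball_eq_basis_vec[OF ab(1) i] linf_dual_ball_eq_basis_vec[OF ab(2) i] by simp
qed

lemma extreme_linf_dual_ball:
  assumes d: "0 < d"
  shows "{\<phi>. extreme_pt \<phi> (dual_ball d (linf d))} = basis_vec ` {..<d} \<union> (\<lambda>i. - basis_vec i) ` {..<d}"
proof (intro equalityI subsetI)
  fix \<phi> assume "\<phi> \<in> {\<phi>. extreme_pt \<phi> (dual_ball d (linf d))}"
  then have \<phi>: "extreme_pt \<phi> (dual_ball d (linf d))" by simp
  have hull: "dual_ball d (linf d) = abs_hull d basis_vec"
    by (rule linf.dual_ball_eq_abs_hull[OF norming_family_basis_vec[OF d]])
  have "basis_vec 0 \<in> dual_ball d (linf d)" "basis_vec 0 \<noteq> (\<lambda>i. 0)"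
    using extreme_pt_in[OF basis_vec_extreme_linf_dual_ball[OF d]] by (auto simp: fun_eq_iff basis_vec_def)
  then have "\<phi> \<noteq> (\<lambda>i. 0)"
    using extreme_pt_zero_symmetric[where S="dual_ball d (linf d)", OF linf.uminus_in_dual_ball] \<phi>
    by metis
  moreover have "abs_hull d basis_vec \<subseteq> dual_ball d (linf d)" "\<phi> \<in> abs_hull d basis_vec"
    using hull extreme_pt_in[OF \<phi>] by simp_all
  ultimately obtain j where "j < d" "\<phi> = basis_vec j \<or> \<phi> = - basis_vec j"
    using extreme_pt_in_abs_hull \<phi> by blast
  then show "\<phi> \<in> basis_vec ` {..<d} \<union> (\<lambda>i. - basis_vec i) ` {..<d}" by auto
next
  fix \<phi> assume "\<phi> \<in> basis_vec ` {..<d} \<union> (\<lambda>i. - basis_vec i) ` {..<d}"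
  then show "\<phi> \<in> {\<phi>. extreme_pt \<phi> (dual_ball d (linf d))}"
    using basis_vec_extreme_linf_dual_ball extreme_pt_uminus[OF linf.uminus_in_dual_ball] by auto
qed

lemma card_signed_basis_vecs: "card (basis_vec ` {..<d} \<union> (\<lambda>i. - basis_vec i) ` {..<d}) = 2 * d"
proof -
  have "inj_on basis_vec {..<d}" "inj_on (\<lambda>i. - basis_vec i) {..<d}"
    by (auto simp: inj_on_def basis_vec_def fun_eq_iff split: if_splits)
  moreover have "basis_vec ` {..<d} \<inter> (\<lambda>i. - basis_vec i) ` {..<d} = {}"
    by (auto simp: basis_vec_def fun_eq_iff split: if_splits)
  ultimately show ?thesis
    by (simp add: card_Un_disjoint card_image)
qed

lemma Pol_linf: "0 < d \<Longrightarrow> Pol d d (linf d)"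
  unfolding Pol_def polyhedral_def
  using linf_is_norm finite_extreme_linf_unit_ball extreme_linf_dual_ball card_signed_basis_vecs by simp

section \<open>Lifting embeddings to sup-norm spaces\<close>

lemma mcomp_rows_mat:
  assumes "is_mat kG kF U"
  shows "mcomp kG (rows_mat m kG \<rho>) U = rows_mat m kF (\<lambda>j l. \<Sum>q<kG. \<rho> j q * U q l)"
  using assms by (intro ext) (auto simp: mcomp_def rows_mat_def is_mat_def)

lemma norming_family_pullback:
  assumes F: "coord_norm kF NF" and G: "coord_norm kG NG"
    and \<rho>: "norming_family kG NG m \<rho>" and U: "U \<in> Emb kF NF kG NG"
  shows "norming_family kF NF m (\<lambda>j l. \<Sum>q<kG. \<rho> j q * U q l)"
proof -
  interpret F: coord_norm kF NF by (rule F)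
  interpret G: coord_norm kG NG by (rule G)
  have dot_eq: "dot kF (\<lambda>l. \<Sum>q<kG. \<rho> j q * U q l) x = dot kG (\<rho> j) (mapply kF U x)" for j x
    unfolding dot_def mapply_def
    by (simp add: sum_distrib_left sum_distrib_right mult.assoc sum.swap[where A="{..<kF}"])
  have Ux: "mapply kF U x \<in> vec kG" "NG (mapply kF U x) = NF x" if "x \<in> vec kF" for x
    using mapply_in_vec[OF Emb_is_mat[OF U]] Emb_isometric[OF U that] by simp_all
  have "(\<lambda>l. \<Sum>q<kG. \<rho> j q * U q l) \<in> dual_ball kF NF" if j: "j < m" for j
    unfolding F.dual_ball_iff
  proof (intro conjI ballI)
    show "(\<lambda>l. \<Sum>q<kG. \<rho> j q * U q l) \<in> vec kF"
      using Emb_is_mat[OF U] by (simp add: vec_def is_mat_def)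
    fix x assume x: "x \<in> vec kF"
    have "\<rho> j \<in> dual_ball kG NG" using \<rho> j by (simp add: norming_family_def)
    then show "\<bar>dot kF (\<lambda>l. \<Sum>q<kG. \<rho> j q * U q l) x\<bar> \<le> NF x"
      using G.dual_ball_le[OF _ Ux(1)[OF x]] Ux(2)[OF x] by (simp add: dot_eq)
  qed
  moreover have "\<exists>j<m. \<bar>dot kF (\<lambda>l. \<Sum>q<kG. \<rho> j q * U q l) x\<bar> = NF x" if x: "x \<in> vec kF" for x
  proof -
    obtain j where "j < m" "\<bar>dot kG (\<rho> j) (mapply kF U x)\<bar> = NG (mapply kF U x)"
      using \<rho> Ux(1)[OF x] by (auto simp: norming_family_def)
    then show ?thesis using Ux(2)[OF x] by (auto simp: dot_eq)
  qed
  ultimately show ?thesis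
    by (simp add: norming_family_def)
qed

lemma linf_Emb_with_rows:
  assumes rows: "\<And>j. j < m \<Longrightarrow> \<theta> j = lincomb d \<rho> (\<Lambda> j) \<and> (\<Sum>i<d. \<bar>\<Lambda> j i\<bar>) \<le> 1"
    and copies: "\<And>i. i < d \<Longrightarrow> \<exists>j<m. \<exists>\<sigma>. \<bar>\<sigma>\<bar> = 1 \<and> (\<forall>i'<d. \<Lambda> j i' = (if i' = i then \<sigma> else 0))"
  shows "\<exists>V\<in>Emb d (linf d) m (linf m). mcomp d V (rows_mat d k \<rho>) = rows_mat m k \<theta>"
proof
  define V where "V j i = (if j < m \<and> i < d then \<Lambda> j i else 0)" for j i
  show "V \<in> Emb d (linf d) m (linf m)"
  proof (rule linf_Emb_intro)
    show "is_mat m d V" by (simp add: is_mat_def V_def)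
    show "(\<Sum>i<d. \<bar>V j i\<bar>) \<le> 1" if "j < m" for j
      using rows[OF that] that by (simp add: V_def)
    show "\<exists>j<m. \<exists>\<sigma>. \<bar>\<sigma>\<bar> = 1 \<and> (\<forall>i'<d. V j i' = (if i' = i then \<sigma> else 0))" if i: "i < d" for i
    proof -
      obtain j \<sigma> where "j < m" "\<bar>\<sigma>\<bar> = 1" "\<forall>i'<d. \<Lambda> j i' = (if i' = i then \<sigma> else 0)"
        using copies[OF i] by blast
      then show ?thesis by (intro exI[of _ j] conjI exI[of _ \<sigma>]) (auto simp: V_def)
    qed
  qed
  show "mcomp d V (rows_mat d k \<rho>) = rows_mat m k \<theta>"
  proof (intro ext)
    fix a b
    show "mcomp d V (rows_mat d k \<rho>) a b = rows_mat m k \<theta> a b"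
    proof (cases "a < m \<and> b < k")
      case True
      then have "\<theta> a b = (\<Sum>i<d. \<Lambda> a i * \<rho> i b)"
        using rows[of a] by (simp add: lincomb_def)
      also have "\<dots> = mcomp d V (rows_mat d k \<rho>) a b"
        unfolding mcomp_def using True by (intro sum.cong) (simp_all add: rows_mat_def V_def)
      finally show ?thesis using True by (simp add: rows_mat_def)
    qed (auto simp: mcomp_def rows_mat_def V_def)
  qed
qed

text \<open>The functionals \<open>\<rho>\<^sub>j \<circ> U\<close> norm \<open>F\<close>, so the dual ball of \<open>F\<close> is their absolutely
  convex hull.  Hence each extreme functional of \<open>F\<close> is one of them up to sign, which gives the
  rows \<open>\<plusminus>e\<^sub>i\<close> of \<open>V\<close>, and each of them is an \<open>\<ell>\<^sub>1\<close>-combination of the extreme functionals,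
  which gives the remaining rows.\<close>
lemma signed_selection_of_extreme_functionals:
  assumes F: "coord_norm kF NF"
    and repF: "represents_up_to_sign d {\<phi>. extreme_pt \<phi> (dual_ball kF NF)} repF"
    and F0: "\<not> extreme_pt (\<lambda>i. 0) (dual_ball kF NF)"
    and \<theta>: "norming_family kF NF m \<theta>"
  obtains g \<sigma> where "\<And>i. i < d \<Longrightarrow> g i < m" "inj_on g {..<d}"
    "\<And>i. i < d \<Longrightarrow> \<bar>\<sigma> i\<bar> = 1" "\<And>i. i < d \<Longrightarrow> \<theta> (g i) = (\<lambda>l. \<sigma> i * repF i l)"
proof -
  interpret F: coord_norm kF NF by (rule F)
  have extF: "extreme_pt (repF i) (dual_ball kF NF)" if "i < d" for i
    using repF that by (simp add: represents_up_to_sign_def)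
  have "\<forall>i\<in>{..<d}. \<exists>j. j < m \<and> (repF i = \<theta> j \<or> repF i = - \<theta> j)"
  proof
    fix i assume "i \<in> {..<d}"
    then have i: "i < d" by simp
    have "abs_hull m \<theta> \<subseteq> dual_ball kF NF" "repF i \<in> abs_hull m \<theta>"
      using F.dual_ball_eq_abs_hull[OF \<theta>] extreme_pt_in[OF extF[OF i]] by simp_all
    moreover have "repF i \<noteq> (\<lambda>i. 0)" using F0 extF[OF i] by auto
    ultimately show "\<exists>j. j < m \<and> (repF i = \<theta> j \<or> repF i = - \<theta> j)"
      using extreme_pt_in_abs_hull[OF _ extF[OF i]] by blast
  qed
  from bchoice[OF this] obtain g
    where g_ball: "\<forall>i\<in>{..<d}. g i < m \<and> (repF i = \<theta> (g i) \<or> repF i = - \<theta> (g i))"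
    by blast
  then have g: "g i < m" "repF i = \<theta> (g i) \<or> repF i = - \<theta> (g i)" if "i < d" for i
    using that by blast+
  have inj: "inj_on g {..<d}"
  proof (rule inj_onI)
    fix i i' assume i: "i \<in> {..<d}" "i' \<in> {..<d}" "g i = g i'"
    then have "repF i = repF i' \<or> repF i = - repF i'"
      using g(2)[of i] g(2)[of i'] by (metis lessThan_iff uminus_uminus_fun)
    moreover have "\<forall>i<d. \<forall>j<d. repF i = repF j \<or> repF i = - repF j \<longrightarrow> i = j"
      using repF by (simp add: represents_up_to_sign_def)
    ultimately show "i = i'"
      using i(1,2) by blast
  qed
  define \<sigma> where "\<sigma> i = (if repF i = \<theta> (g i) then 1 else - 1 :: real)" for i
  have \<theta>_g: "\<theta> (g i) = (\<lambda>l. \<sigma> i * repF i l)" if i: "i < d" for i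
  proof (cases "repF i = \<theta> (g i)")
    case False
    then have "repF i = - \<theta> (g i)" using g(2)[OF i] by blast
    then show ?thesis using False by (simp add: \<sigma>_def fun_eq_iff)
  qed (simp add: \<sigma>_def)
  show ?thesis
  proof (rule that[OF g(1) inj _ \<theta>_g])
    show "\<bar>\<sigma> i\<bar> = 1" for i by (simp add: \<sigma>_def)
  qed
qed

lemma linf_Emb_from_signed_selection:
  assumes g: "\<And>i. i < d \<Longrightarrow> g i < m" "inj_on g {..<d}"
    and \<sigma>: "\<And>i. i < d \<Longrightarrow> \<bar>\<sigma> i\<bar> = 1" "\<And>i. i < d \<Longrightarrow> \<theta> (g i) = (\<lambda>l. \<sigma> i * \<rho> i l)"
    and hull: "\<And>j. j < m \<Longrightarrow> \<theta> j \<in> abs_hull d \<rho>"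
  shows "\<exists>V\<in>Emb d (linf d) m (linf m). mcomp d V (rows_mat d k \<rho>) = rows_mat m k \<theta>"
proof -
  have "\<forall>j\<in>{..<m}. \<exists>l. \<theta> j = lincomb d \<rho> l \<and> (\<Sum>i<d. \<bar>l i\<bar>) \<le> 1"
    using hull unfolding abs_hull_def by blast
  from bchoice[OF this] obtain \<Lambda>0
    where "\<forall>j\<in>{..<m}. \<theta> j = lincomb d \<rho> (\<Lambda>0 j) \<and> (\<Sum>i<d. \<bar>\<Lambda>0 j i\<bar>) \<le> 1"
    by blast
  then have \<Lambda>0: "\<theta> j = lincomb d \<rho> (\<Lambda>0 j) \<and> (\<Sum>i<d. \<bar>\<Lambda>0 j i\<bar>) \<le> 1" if "j < m" for j
    using that by blast
  define \<Lambda> where "\<Lambda> j = (if \<exists>i<d. g i = j then (\<lambda>i'. if g i' = j then \<sigma> i' else 0) else \<Lambda>0 j)" for j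
  have \<Lambda>_g: "\<Lambda> (g i) i' = (if i' = i then \<sigma> i else 0)" if i: "i < d" "i' < d" for i i'
  proof -
    have "g i' = g i \<longleftrightarrow> i' = i" using g(2) i by (auto dest: inj_onD)
    then show ?thesis using i(1) by (auto simp: \<Lambda>_def)
  qed
  show ?thesis
  proof (rule linf_Emb_with_rows)
    fix j assume j: "j < m"
    show "\<theta> j = lincomb d \<rho> (\<Lambda> j) \<and> (\<Sum>i<d. \<bar>\<Lambda> j i\<bar>) \<le> 1"
    proof (cases "\<exists>i<d. g i = j")
      case True
      then obtain i where i: "i < d" "g i = j" by blast
      have "lincomb d \<rho> (\<Lambda> j) = lincomb d \<rho> (\<lambda>i'. if i' = i then \<sigma> i else 0)"
        using \<Lambda>_g[OF i(1)] i(2) by (intro lincomb_cong) simp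
      moreover have "(\<Sum>i'<d. \<bar>\<Lambda> j i'\<bar>) = (\<Sum>i'<d. if i' = i then 1 else 0)"
        using \<Lambda>_g[OF i(1)] i(2) \<sigma>(1)[OF i(1)] by (intro sum.cong) simp_all
      ultimately show ?thesis
        using \<sigma>(2)[OF i(1)] i by (simp add: lincomb_single)
    next
      case False
      then have "\<Lambda> j = \<Lambda>0 j" by (simp only: \<Lambda>_def if_not_P if_False)
      then show ?thesis using \<Lambda>0[OF j] by simp
    qed
  next
    fix i assume i: "i < d"
    then show "\<exists>j<m. \<exists>s. \<bar>s\<bar> = 1 \<and> (\<forall>i'<d. \<Lambda> j i' = (if i' = i then s else 0))"
      using g(1)[OF i] \<sigma>(1)[OF i] \<Lambda>_g[OF i] by (intro exI[of _ "g i"] conjI exI[of _ "\<sigma> i"]) auto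
  qed
qed

lemma Emb_lifts_to_linf:
  assumes F: "coord_norm kF NF" and G: "coord_norm kG NG"
    and repF: "represents_up_to_sign d {\<phi>. extreme_pt \<phi> (dual_ball kF NF)} repF"
    and F0: "\<not> extreme_pt (\<lambda>i. 0) (dual_ball kF NF)"
    and repG: "norming_family kG NG m repG"
    and U: "U \<in> Emb kF NF kG NG"
  shows "\<exists>V\<in>Emb d (linf d) m (linf m). mcomp d V (rows_mat d kF repF) = mcomp kG (rows_mat m kG repG) U"
proof -
  interpret F: coord_norm kF NF by (rule F)
  define \<theta> where "\<theta> = (\<lambda>j l. \<Sum>q<kG. repG j q * U q l)"
  have \<theta>: "norming_family kF NF m \<theta>"
    using norming_family_pullback[OF F G repG U] by (simp add: \<theta>_def)
  obtain g \<sigma> where "\<And>i. i < d \<Longrightarrow> g i < m" "inj_on g {..<d}"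
    "\<And>i. i < d \<Longrightarrow> \<bar>\<sigma> i\<bar> = 1" "\<And>i. i < d \<Longrightarrow> \<theta> (g i) = (\<lambda>l. \<sigma> i * repF i l)"
    using signed_selection_of_extreme_functionals[OF F repF F0 \<theta>] by blast
  moreover have "\<theta> j \<in> abs_hull d repF" if "j < m" for j
    using \<theta> that F.dual_ball_eq_abs_hull[OF F.norming_family_if_represents[OF repF]]
    by (simp add: norming_family_def)
  ultimately have "\<exists>V\<in>Emb d (linf d) m (linf m). mcomp d V (rows_mat d kF repF) = rows_mat m kF \<theta>"
    by (rule linf_Emb_from_signed_selection)
  then show ?thesis
    using mcomp_rows_mat[OF Emb_is_mat[OF U]] by (simp add: \<theta>_def)
qed

section \<open>Transferring the Ramsey property\<close>

lemma eps_mono_precomp: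
  assumes \<iota>F: "\<iota>F \<in> Emb kF NF d (linf d)"
    and lift: "\<And>U. U \<in> Emb kF NF kG NG \<Longrightarrow> \<exists>V\<in>Emb d (linf d) m (linf m). mcomp d V \<iota>F = mcomp kG \<iota>G U"
    and mono: "eps_mono (\<lambda>A. c (mcomp d A \<iota>F)) r (opdist d (linf d) (linf n)) \<epsilon>
      (Emb d (linf d) n (linf n)) (mcomp m \<gamma> ` Emb d (linf d) m (linf m))"
  shows "eps_mono c r (opdist kF NF (linf n)) \<epsilon> (Emb kF NF n (linf n))
    (mcomp kG (mcomp m \<gamma> \<iota>G) ` Emb kF NF kG NG)"
proof -
  obtain i where i: "i < r" and near: "\<And>s. s \<in> mcomp m \<gamma> ` Emb d (linf d) m (linf m) \<Longrightarrow>
      \<exists>t\<in>Emb d (linf d) n (linf n). c (mcomp d t \<iota>F) = i \<and> opdist d (linf d) (linf n) s t \<le> \<epsilon>"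
    using mono unfolding eps_mono_def by blast
  have "\<exists>t\<in>Emb kF NF n (linf n). c t = i \<and> opdist kF NF (linf n) (mcomp kG (mcomp m \<gamma> \<iota>G) U) t \<le> \<epsilon>"
    if U: "U \<in> Emb kF NF kG NG" for U
  proof -
    obtain V where V: "V \<in> Emb d (linf d) m (linf m)" and VU: "mcomp d V \<iota>F = mcomp kG \<iota>G U"
      using lift[OF U] by blast
    obtain t where t: "t \<in> Emb d (linf d) n (linf n)" "c (mcomp d t \<iota>F) = i"
      "opdist d (linf d) (linf n) (mcomp m \<gamma> V) t \<le> \<epsilon>"
      using near[of "mcomp m \<gamma> V"] V by blast
    have "mcomp kG (mcomp m \<gamma> \<iota>G) U = mcomp d (mcomp m \<gamma> V) \<iota>F"
      by (simp add: mcomp_assoc VU)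
    then have "opdist kF NF (linf n) (mcomp kG (mcomp m \<gamma> \<iota>G) U) (mcomp d t \<iota>F) \<le> \<epsilon>"
      using opdist_mcomp_right_le[OF \<iota>F, of n "mcomp m \<gamma> V" t] t(3) by simp
    then show ?thesis
      using mcomp_in_Emb[OF t(1) \<iota>F] t(2) by blast
  qed
  then show ?thesis
    using i unfolding eps_mono_def by blast
qed

lemma n_inf_prop_imp_le:
  assumes "0 < r" and "n_inf_prop d m r \<epsilon> n"
  shows "m \<le> n"
proof -
  have "coloring (\<lambda>_. 0) r (Emb d (linf d) n (linf n))"
    using assms(1) by (simp add: coloring_def)
  then obtain \<gamma> where "\<gamma> \<in> Emb m (linf m) n (linf n)"
    using assms(2) unfolding n_inf_prop_def by blast
  then show ?thesis by (rule linf_Emb_dim_le)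
qed

lemma n_pol_prop_if_n_inf_prop:
  assumes d: "0 < d" and m: "0 < m" and r: "0 < r" and P: "n_inf_prop d m r \<epsilon> n"
  shows "n_pol_prop d m r \<epsilon> n"
  unfolding n_pol_prop_def
proof (intro conjI allI impI n_inf_prop_imp_le[OF r P])
  fix kF NF kG NG c
  assume PF: "Pol d kF NF" and PG: "Pol m kG NG" and col: "coloring c r (Emb kF NF n (linf n))"
  interpret F: coord_norm kF NF using PF by (rule Pol_coord_norm)
  interpret G: coord_norm kG NG using PG by (rule Pol_coord_norm)
  obtain repF where repF: "represents_up_to_sign d {\<phi>. extreme_pt \<phi> (dual_ball kF NF)} repF"
    using Pol_represents_up_to_sign(2)[OF PF d] by blast
  obtain repG where repG: "represents_up_to_sign m {\<phi>. extreme_pt \<phi> (dual_ball kG NG)} repG"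
    using Pol_represents_up_to_sign(2)[OF PG m] by blast
  define \<iota>F where "\<iota>F = rows_mat d kF repF"
  define \<iota>G where "\<iota>G = rows_mat m kG repG"
  have \<iota>F: "\<iota>F \<in> Emb kF NF d (linf d)" and \<iota>G: "\<iota>G \<in> Emb kG NG m (linf m)"
    unfolding \<iota>F_def \<iota>G_def
    by (intro F.rows_mat_in_Emb G.rows_mat_in_Emb F.norming_family_if_represents
        G.norming_family_if_represents repF repG)+
  have "coloring (\<lambda>A. c (mcomp d A \<iota>F)) r (Emb d (linf d) n (linf n))"
    using col mcomp_in_Emb[OF _ \<iota>F] by (auto simp: coloring_def)
  then obtain \<gamma> where \<gamma>: "\<gamma> \<in> Emb m (linf m) n (linf n)"
    and mono: "eps_mono (\<lambda>A. c (mcomp d A \<iota>F)) r (opdist d (linf d) (linf n)) \<epsilon>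
      (Emb d (linf d) n (linf n)) (mcomp m \<gamma> ` Emb d (linf d) m (linf m))"
    using P unfolding n_inf_prop_def by blast
  have "eps_mono c r (opdist kF NF (linf n)) \<epsilon> (Emb kF NF n (linf n))
      (mcomp kG (mcomp m \<gamma> \<iota>G) ` Emb kF NF kG NG)"
  proof (rule eps_mono_precomp[OF \<iota>F _ mono])
    fix U assume "U \<in> Emb kF NF kG NG"
    then show "\<exists>V\<in>Emb d (linf d) m (linf m). mcomp d V \<iota>F = mcomp kG \<iota>G U"
      unfolding \<iota>F_def \<iota>G_def
      using Emb_lifts_to_linf[OF _ _ repF Pol_represents_up_to_sign(1)[OF PF d]
          G.norming_family_if_represents[OF repG]] F.coord_norm_axioms G.coord_norm_axioms
      by blast
  qed
  then show "\<exists>T\<in>Emb kG NG n (linf n). eps_mono c r (opdist kF NF (linf n)) \<epsilon> (Emb kF NF n (linf n))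
      (mcomp kG T ` Emb kF NF kG NG)"
    using mcomp_in_Emb[OF \<gamma> \<iota>G] by blast
qed

lemma n_inf_prop_if_n_pol_prop:
  "0 < d \<Longrightarrow> 0 < m \<Longrightarrow> n_pol_prop d m r \<epsilon> n \<Longrightarrow> n_inf_prop d m r \<epsilon> n"
  using Pol_linf unfolding n_pol_prop_def n_inf_prop_def by blast

theorem proposition6p31:
  fixes d m r :: nat and \<epsilon> :: real
  assumes "0 < d" and "0 < m" and "0 < r" and "0 < \<epsilon>"
  shows "n_pol d m r \<epsilon> = n_inf d m r \<epsilon>"
proof -
  have "n_pol_prop d m r \<epsilon> = n_inf_prop d m r \<epsilon>"
    using n_pol_prop_if_n_inf_prop[OF assms(1-3)] n_inf_prop_if_n_pol_prop[OF assms(1,2)]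
    by (intro ext iffI)
  then show ?thesis by (simp add: n_pol_def n_inf_def)
qed

end
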